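(* Let $(Z_i)_{i\in\mathbb{Z}}$ be i.i.d. zero-mean random vectors in $\mathbb{R}^d$ that are regularly varying with exponent $\alpha>1$ and tail measure $\nu$, let $\mathcal{A}$ be an invertible $d\times d$ matrix, and let $\Gamma$ be an admissible failure set. Let $f:\mathbb{R}\times\mathbb{R}^d\to\mathbb{R}_+$ be a nonnegative continuous function. Then \[\lim_{n\to\infty}\frac1n\sum_{i=0}^{n-1}E\Big[\exp\big(-f(i/n,\mathcal{A}Z_i/n)\big)\,\Big|\,\mathcal{A}Z_i\in n\Gamma\Big]=E\big[\exp(-f(U,X))\big],\] where $U$ is a standard uniform random variable independent of a random vector $X$ with law $P(X\in\cdot)=\nu\big(\mathcal{A}^{-1}(\cdot\cap\Gamma)\big)/\nu(\mathcal{A}^{-1}\Gamma)$.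
   Context: All vector norms are Euclidean. A random vector $Z_0$ in $\mathbb{R}^d$ is regularly varying with exponent $\alpha$ and tail measure $\nu$ if $\nu$ is a nonzero Radon measure on $[-\infty,\infty]^d\setminus\{0\}$ with $P(Z_0\in u\,\cdot)/P(\|Z_0\|>u)\to\nu(\cdot)$ vaguely as $u\to\infty$, and $\nu(c\Phi)=c^{-\alpha}\nu(\Phi)$ for all measurable $\Phi$, $c>0$. A set $\Gamma\subset\mathbb{R}^d$ is an admissible failure set if it is measurable, $\Gamma\subset\{y:\|y\|>\delta_0\}$ for some $\delta_0>0$, $\nu(\mathcal{A}^{-1}\Gamma)>0$ and $\nu(\partial(\mathcal{A}^{-1}\Gamma))=0$. *)

theory Defs
  imports "HOL-Probability.Probability"
begin

text \<open>The compactified space [-\<infinity>,\<infinity>]^d is modelled as the type ereal^'d with its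
  product topology; R^d embeds into it coordinatewise.\<close>

definition ext_emb :: "real^'d \<Rightarrow> ereal^'d" where
  "ext_emb x = (\<chi> i. ereal (x $ i))"

definition ext_scale :: "real \<Rightarrow> (ereal^'d) set \<Rightarrow> (ereal^'d) set" where
  "ext_scale c \<Phi> = (\<lambda>x. \<chi> i. ereal c * x $ i) ` \<Phi>"

text \<open>Regular variation of a random vector Z with exponent \<alpha> and tail measure \<nu>:
  \<nu> is a nonzero Radon measure on [-\<infinity>,\<infinity>]^d minus {0} (Borel, no mass at 0, finite on
  compact sets avoiding 0), homogeneous of order -\<alpha>, and
  P(Z \<in> u \<cdot>)/P(\<parallel>Z\<parallel> > u) converges vaguely to \<nu>, i.e. integrals of every continuous
  function with compact support in [-\<infinity>,\<infinity>]^d minus {0} converge.\<close>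

definition regularly_varying ::
  "'a measure \<Rightarrow> ('a \<Rightarrow> real^'d) \<Rightarrow> real \<Rightarrow> (ereal^'d) measure \<Rightarrow> bool" where
  "regularly_varying M Z \<alpha> \<nu> \<longleftrightarrow>
     Z \<in> borel_measurable M \<and>
     sets \<nu> = sets borel \<and>
     emeasure \<nu> {0} = 0 \<and>
     emeasure \<nu> (space \<nu> - {0}) \<noteq> 0 \<and>
     (\<forall>K. compact K \<and> 0 \<notin> K \<longrightarrow> emeasure \<nu> K < \<infinity>) \<and>
     (\<forall>c>0. \<forall>\<Phi>\<in>sets borel. emeasure \<nu> (ext_scale c \<Phi>) = ennreal (c powr (-\<alpha>)) * emeasure \<nu> \<Phi>) \<and>
     (\<forall>g :: ereal^'d \<Rightarrow> real. continuous_on UNIV g \<and>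
        (\<exists>K. compact K \<and> 0 \<notin> K \<and> (\<forall>x. x \<notin> K \<longrightarrow> g x = 0)) \<longrightarrow>
        ((\<lambda>u. (\<integral>\<omega>. g (ext_emb (inverse u *\<^sub>R Z \<omega>)) \<partial>M)
                / measure M {\<omega>\<in>space M. norm (Z \<omega>) > u})
          \<longlongrightarrow> (\<integral>x. g x \<partial>\<nu>)) at_top)"

definition admissible_failure_set ::
  "(ereal^'d) measure \<Rightarrow> real^'d^'d \<Rightarrow> (real^'d) set \<Rightarrow> bool" where
  "admissible_failure_set \<nu> A \<Gamma> \<longleftrightarrow>
     \<Gamma> \<in> sets borel \<and>
     (\<exists>\<delta>0>0. \<Gamma> \<subseteq> {y. norm y > \<delta>0}) \<and>
     emeasure \<nu> (ext_emb ` ((\<lambda>y. matrix_inv A *v y) ` \<Gamma>)) > 0 \<and>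
     emeasure \<nu> (frontier (ext_emb ` ((\<lambda>y. matrix_inv A *v y) ` \<Gamma>))) = 0"

definition cond_exp_event :: "'a measure \<Rightarrow> ('a \<Rightarrow> real) \<Rightarrow> 'a set \<Rightarrow> real" where
  "cond_exp_event M h B = (\<integral>\<omega>. indicator B \<omega> * h \<omega> \<partial>M) / measure M B"

end

theory Submission
  imports Defs
begin

text \<open>By identical distribution the \<open>i\<close>-th summand is \<open>F\<^sub>n(i/n)\<close>, where \<open>F\<^sub>n(t)\<close> is the conditional
  expectation of \<open>exp(-f(t, A Z\<^sub>0/n))\<close> given \<open>Z\<^sub>0/n \<in> W = A\<^sup>-\<^sup>1\<Gamma>\<close>. Divided by \<open>P(\<parallel>Z\<^sub>0\<parallel> > n)\<close>,
  numerator and denominator converge to \<open>\<nu>\<close>-integrals over the image of \<open>W\<close> in the compactification: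
  the indicator of \<open>W\<close> is squeezed between continuous functions that vanish near the origin and,
  once clamped to a large cube, extend continuously to \<open>[-\<infinity>,\<infinity>]\<^sup>d\<close>; the boundary of \<open>W\<close> is
  \<open>\<nu>\<close>-null, and so, by homogeneity, is the scale-invariant set of points with an infinite
  coordinate. Hence \<open>F\<^sub>n(t\<^sub>n) \<rightarrow> E exp(-f(t, X))\<close> whenever \<open>t\<^sub>n \<rightarrow> t\<close>. The average over \<open>i\<close> is the
  integral over \<open>[0, 1]\<close> of a step function that samples \<open>F\<^sub>n\<close> at \<open>\<lfloor>nt\<rfloor>/n \<rightarrow> t\<close>, so dominated
  convergence and the independence of \<open>U\<close> and \<open>X\<close> give the limit \<open>E exp(-f(U, X))\<close>.\<close>

section \<open>The compactified space\<close>

lemma compact_ereal_vec: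
  assumes "closed (S :: (ereal^'d) set)"
  shows "compact S"
proof -
  have "compact_space (product_topology (\<lambda>i::'d. (euclidean :: ereal topology)) UNIV)"
    unfolding compact_space_product_topology by (simp add: compact_space_def compact_UNIV)
  then have "compact (UNIV :: ('d \<Rightarrow> ereal) set)"
    by (simp add: euclidean_product_topology compact_space_def)
  then have "compact ((\<lambda>f. \<chi> i. f i) ` (UNIV :: ('d \<Rightarrow> ereal) set))"
    by (intro compact_continuous_image continuous_on_vec_lambda continuous_on_product_coordinates)
  moreover have "(\<lambda>f. \<chi> i. f i) ` (UNIV :: ('d \<Rightarrow> ereal) set) = UNIV"
    by (metis surj_def vec_lambda_eta)
  ultimately have "compact (UNIV :: (ereal^'d) set)"
    by simp
  from closed_Int_compact[OF assms this] show ?thesis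
    by simp
qed

definition vec_real_of_ereal :: "ereal^'d \<Rightarrow> real^'d" where
  "vec_real_of_ereal y = (\<chi> i. real_of_ereal (y $ i))"

definition clamp_vec :: "real \<Rightarrow> real^'d \<Rightarrow> real^'d" where
  "clamp_vec C x = (\<chi> i. max (- C) (min C (x $ i)))"

definition clamp_ereal_vec :: "real \<Rightarrow> ereal^'d \<Rightarrow> real^'d" where
  "clamp_ereal_vec C y = (\<chi> i. real_of_ereal (max (- ereal C) (min (ereal C) (y $ i))))"

definition cube_exterior :: "real \<Rightarrow> (ereal^'d) set" where
  "cube_exterior r = {y. \<exists>i. ereal r \<le> \<bar>y $ i\<bar>}"

definition ext_zero :: "(real^'d \<Rightarrow> real) \<Rightarrow> ereal^'d \<Rightarrow> real" where
  "ext_zero h y = (if y \<in> range ext_emb then h (vec_real_of_ereal y) else 0)"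

lemma vec_real_of_ereal_ext_emb [simp]: "vec_real_of_ereal (ext_emb x) = x"
  by (simp add: vec_real_of_ereal_def ext_emb_def)

lemma inj_ext_emb: "inj ext_emb"
  by (metis injI vec_real_of_ereal_ext_emb)

lemma range_ext_emb: "range ext_emb = {y :: ereal^'d. \<forall>i. \<bar>y $ i\<bar> \<noteq> \<infinity>}"
proof (intro set_eqI iffI)
  fix y :: "ereal^'d"
  assume "y \<in> {y. \<forall>i. \<bar>y $ i\<bar> \<noteq> \<infinity>}"
  then have "y = ext_emb (vec_real_of_ereal y)"
    by (auto simp: vec_eq_iff ext_emb_def vec_real_of_ereal_def ereal_real)
  then show "y \<in> range ext_emb"
    by blast
qed (auto simp: ext_emb_def vec_real_of_ereal_def)

lemma ext_emb_image:
  "ext_emb ` S = {y :: ereal^'d. (\<forall>i. \<bar>y $ i\<bar> \<noteq> \<infinity>) \<and> vec_real_of_ereal y \<in> S}"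
proof (intro set_eqI iffI)
  fix y :: "ereal^'d"
  assume y: "y \<in> {y. (\<forall>i. \<bar>y $ i\<bar> \<noteq> \<infinity>) \<and> vec_real_of_ereal y \<in> S}"
  then obtain x where "y = ext_emb x"
    using range_ext_emb by blast
  then show "y \<in> ext_emb ` S"
    using y by simp
qed (auto simp: ext_emb_def vec_real_of_ereal_def)

lemma continuous_on_clamp_ereal_vec: "continuous_on UNIV (clamp_ereal_vec C)"
proof -
  let ?c = "\<lambda>z. max (- ereal C) (min (ereal C) z)"
  have "?c ` UNIV \<subseteq> UNIV - {\<infinity>, -\<infinity>}"
    by (auto simp: max_def min_def)
  then have "continuous_on (?c ` UNIV) real_of_ereal"
    using continuous_on_real continuous_on_subset by blast
  then have "continuous_on UNIV (real_of_ereal \<circ> ?c)"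
    by (intro continuous_on_compose) (intro continuous_intros)
  then have c: "continuous_on UNIV (\<lambda>z. real_of_ereal (?c z))"
    by (simp add: o_def)
  show ?thesis
    unfolding clamp_ereal_vec_def
    by (intro continuous_on_vec_lambda continuous_on_compose2[OF c] continuous_on_component
        continuous_on_id) auto
qed

lemma clamp_ereal_vec_ext_emb [simp]: "clamp_ereal_vec C (ext_emb x) = clamp_vec C x"
  by (simp add: clamp_ereal_vec_def clamp_vec_def ext_emb_def vec_eq_iff max_def min_def)

lemma clamp_ereal_vec_zero: "0 \<le> C \<Longrightarrow> clamp_ereal_vec C 0 = 0"
  by (simp add: clamp_ereal_vec_def vec_eq_iff zero_ereal_def)

lemma clamp_vec_eq_self: "norm x \<le> C \<Longrightarrow> clamp_vec C x = x"
proof -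
  assume "norm x \<le> C"
  then have "\<bar>x $ i\<bar> \<le> C" for i
    using component_le_norm_cart[of x i] by linarith
  then have "max (- C) (min C (x $ i)) = x $ i" for i
    by (metis abs_le_iff max.absorb2 min.absorb2 minus_le_iff)
  then show ?thesis
    by (simp add: clamp_vec_def vec_eq_iff)
qed

lemma norm_clamp_vec_ge: "0 \<le> C \<Longrightarrow> clamp_vec C x \<noteq> x \<Longrightarrow> C \<le> norm (clamp_vec C x)"
proof -
  assume "0 \<le> C" "clamp_vec C x \<noteq> x"
  then obtain i where "clamp_vec C x $ i \<noteq> x $ i"
    by (auto simp: vec_eq_iff)
  then have "\<bar>clamp_vec C x $ i\<bar> = C"
    using \<open>0 \<le> C\<close> by (auto simp: clamp_vec_def max_def min_def)
  then show ?thesis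
    using component_le_norm_cart[of "clamp_vec C x" i] by linarith
qed

lemma clamp_vec_invariant:
  assumes "0 \<le> C" and "\<And>x. C \<le> norm x \<Longrightarrow> h x = c"
  shows "h (clamp_vec C x) = h x"
proof (cases "clamp_vec C x = x")
  case False
  then have "C \<le> norm (clamp_vec C x)" and "C \<le> norm x"
    using norm_clamp_vec_ge[OF assms(1)] clamp_vec_eq_self[of x C] by force+
  then show ?thesis
    using assms(2) by simp
qed simp

lemma exists_component_ge_norm:
  fixes x :: "real^'d"
  assumes "\<rho> \<le> norm x"
  shows "\<exists>i. \<rho> / CARD('d) \<le> \<bar>x $ i\<bar>"
proof (rule ccontr)
  assume "\<not> ?thesis"
  then have "\<bar>x $ i\<bar> < \<rho> / CARD('d)" for i
    by (meson not_le)
  then have "(\<Sum>i\<in>UNIV. \<bar>x $ i\<bar>) < (\<Sum>i\<in>(UNIV::'d set). \<rho> / CARD('d))"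
    by (intro sum_strict_mono) auto
  then show False
    using norm_le_l1_cart[of x] assms by simp
qed

lemma clamp_ereal_vec_in_cube_exterior:
  fixes y :: "ereal^'d"
  assumes "0 \<le> C" and "\<rho> \<le> norm (clamp_ereal_vec C y)"
  shows "y \<in> cube_exterior (\<rho> / CARD('d))"
proof -
  obtain i where i: "\<rho> / CARD('d) \<le> \<bar>clamp_ereal_vec C y $ i\<bar>"
    using exists_component_ge_norm[OF assms(2)] by blast
  have "ereal \<bar>clamp_ereal_vec C y $ i\<bar> \<le> \<bar>y $ i\<bar>"
    using assms(1) by (cases "y $ i") (auto simp: clamp_ereal_vec_def max_def min_def)
  then show ?thesis
    using i unfolding cube_exterior_def by (metis (mono_tags) ereal_less_eq(3) order_trans mem_Collect_eq)
qed

lemma clamp_ereal_vec_support: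
  fixes y :: "ereal^'d" and h :: "real^'d \<Rightarrow> real"
  assumes "0 \<le> C" and "\<And>x. \<bar>h x\<bar> \<le> B" and "\<And>x. norm x < \<rho> \<Longrightarrow> h x = 0"
  shows "\<bar>h (clamp_ereal_vec C y)\<bar> \<le> B * indicator (cube_exterior (\<rho> / CARD('d))) y"
proof (cases "\<rho> \<le> norm (clamp_ereal_vec C y)")
  case True
  then show ?thesis
    using clamp_ereal_vec_in_cube_exterior[OF assms(1) True] assms(2)[of "clamp_ereal_vec C y"]
    by simp
next
  case False
  have "0 \<le> B"
    using assms(2)[of 0] by simp
  then show ?thesis
    using False assms(3) by simp
qed

lemma ext_emb_in_cube_exterior:
  fixes x :: "real^'d"
  assumes "\<rho> \<le> norm x"
  shows "ext_emb x \<in> cube_exterior (\<rho> / CARD('d))"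
  using exists_component_ge_norm[OF assms] by (auto simp: cube_exterior_def ext_emb_def)

lemma closed_cube_exterior: "0 \<le> r \<Longrightarrow> closed (cube_exterior r)"
proof -
  assume "0 \<le> r"
  then have "ereal r \<le> \<bar>z\<bar> \<longleftrightarrow> z \<le> - ereal r \<or> ereal r \<le> z" for z
    by (cases z) auto
  then have "{z::ereal. ereal r \<le> \<bar>z\<bar>} = {..- ereal r} \<union> {ereal r..}"
    by auto
  then have "closed {z::ereal. ereal r \<le> \<bar>z\<bar>}"
    by (simp add: closed_Un)
  then have "closed ((\<lambda>y::ereal^'d. y $ i) -` {z. ereal r \<le> \<bar>z\<bar>})" for i
    by (rule closed_vimage_vec_nth)
  then have "closed (\<Union>i. (\<lambda>y::ereal^'d. y $ i) -` {z. ereal r \<le> \<bar>z\<bar>})"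
    by (intro closed_UN) auto
  moreover have "cube_exterior r = (\<Union>i. (\<lambda>y::ereal^'d. y $ i) -` {z. ereal r \<le> \<bar>z\<bar>})"
    by (auto simp: cube_exterior_def)
  ultimately show ?thesis
    by metis
qed

lemma cube_exterior_borel: "0 \<le> r \<Longrightarrow> cube_exterior r \<in> sets borel"
  by (simp add: borel_closed closed_cube_exterior)

lemma zero_notin_cube_exterior: "0 < r \<Longrightarrow> 0 \<notin> cube_exterior r"
  by (auto simp: cube_exterior_def)

lemma mem_ext_scale_iff:
  assumes "0 < c"
  shows "y \<in> ext_scale c S \<longleftrightarrow> (\<chi> i. ereal (inverse c) * y $ i) \<in> S"
proof -
  have inv: "ereal (inverse c) * (ereal c * z) = z" "ereal c * (ereal (inverse c) * z) = z" for z
    using assms by (cases z; simp)+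
  show ?thesis
  proof
    assume "y \<in> ext_scale c S"
    then obtain x where "x \<in> S" "y = (\<chi> i. ereal c * x $ i)"
      by (auto simp: ext_scale_def)
    then show "(\<chi> i. ereal (inverse c) * y $ i) \<in> S"
      by (simp add: inv vec_lambda_eta)
  next
    assume "(\<chi> i. ereal (inverse c) * y $ i) \<in> S"
    moreover have "y = (\<chi> i. ereal c * (\<chi> i. ereal (inverse c) * y $ i) $ i)"
      by (simp add: inv vec_lambda_eta)
    ultimately show "y \<in> ext_scale c S"
      unfolding ext_scale_def by blast
  qed
qed

lemma ext_scale_nonfinite: "0 < c \<Longrightarrow> ext_scale c (- range ext_emb) = - range ext_emb"
proof -
  assume c: "0 < c"
  have "\<bar>ereal (inverse c) * z\<bar> = \<infinity> \<longleftrightarrow> \<bar>z\<bar> = \<infinity>" for z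
    using c by (cases z) auto
  then show ?thesis
    using c by (simp add: set_eq_iff mem_ext_scale_iff range_ext_emb)
qed

lemma borel_measurable_ereal_vec_nth [measurable]: "(\<lambda>y::ereal^'d. y $ i) \<in> borel_measurable borel"
  by (intro borel_measurable_continuous_onI continuous_on_component continuous_on_id)

lemma borel_measurable_vec_real_of_ereal [measurable]:
  "(vec_real_of_ereal :: ereal^'d \<Rightarrow> real^'d) \<in> borel_measurable borel"
  unfolding vec_real_of_ereal_def
  by (subst borel_measurable_euclidean_space) (auto simp: Basis_vec_def inner_axis)

lemma continuous_on_ext_emb: "continuous_on UNIV (ext_emb :: real^'d \<Rightarrow> ereal^'d)"
  unfolding ext_emb_def
  by (intro continuous_on_vec_lambda continuous_on_ereal continuous_on_component continuous_on_id)

lemma sets_range_ext_emb [measurable]: "range ext_emb \<in> sets (borel :: (ereal^'d) measure)"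
  unfolding range_ext_emb by measurable

lemma sets_ext_emb_image [measurable]:
  assumes "S \<in> sets borel"
  shows "ext_emb ` S \<in> sets (borel :: (ereal^'d) measure)"
  using assms unfolding ext_emb_image by measurable

lemma ext_zero_ext_emb [simp]: "ext_zero h (ext_emb x) = h x"
  by (simp add: ext_zero_def)

lemma ext_zero_nonfinite [simp]: "y \<notin> range ext_emb \<Longrightarrow> ext_zero h y = 0"
  by (simp add: ext_zero_def)

lemma borel_measurable_ext_zero [measurable]:
  assumes [measurable]: "h \<in> borel_measurable borel"
  shows "ext_zero h \<in> borel_measurable borel"
  unfolding ext_zero_def
  by (intro measurable_If_set measurable_compose[OF borel_measurable_vec_real_of_ereal]) auto

lemma ext_emb_in_frontier:
  fixes x :: "real^'d"
  assumes "x \<in> closure W" and "x \<notin> interior W"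
  shows "ext_emb x \<in> frontier (ext_emb ` W)"
proof -
  have "ext_emb ` closure W \<subseteq> closure (ext_emb ` W)"
    by (intro image_closure_subset continuous_on_subset[OF continuous_on_ext_emb])
      (auto intro: closure_subset[THEN subsetD])
  moreover have "ext_emb x \<notin> interior (ext_emb ` W)"
  proof
    assume "ext_emb x \<in> interior (ext_emb ` W)"
    then obtain T where "open T" "ext_emb x \<in> T" "T \<subseteq> ext_emb ` W"
      by (meson interiorE)
    have "open (ext_emb -` T)"
      using \<open>open T\<close> continuous_on_ext_emb by (rule open_vimage)
    moreover have "ext_emb -` T \<subseteq> W"
      using \<open>T \<subseteq> ext_emb ` W\<close> inj_ext_emb by (auto dest: injD)
    ultimately have "x \<in> interior W"
      using \<open>ext_emb x \<in> T\<close> by (meson interiorI vimageI2)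
    then show False
      using assms(2) by simp
  qed
  ultimately show ?thesis
    using assms(1) by (auto simp: frontier_def)
qed

section \<open>Regularly varying vectors\<close>

locale rv_vector = prob_space M
  for M :: "'a measure" +
  fixes Y :: "'a \<Rightarrow> real^'d" and \<alpha> :: real and \<nu> :: "(ereal^'d) measure"
  assumes regularly_varying: "regularly_varying M Y \<alpha> \<nu>" and alpha_pos: "0 < \<alpha>"
begin

lemma sets_tail_measure [measurable_cong]: "sets \<nu> = sets borel"
  using regularly_varying by (simp add: regularly_varying_def)

lemma borel_measurable_Y [measurable]: "Y \<in> borel_measurable M"
  using regularly_varying by (simp add: regularly_varying_def)

lemma emeasure_cube_exterior_finite:
  assumes "0 < r"
  shows "emeasure \<nu> (cube_exterior r) < \<infinity>"
proof -
  have "compact (cube_exterior r)"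
    using assms by (intro compact_ereal_vec closed_cube_exterior) simp
  moreover have "0 \<notin> cube_exterior r"
    using assms by (rule zero_notin_cube_exterior)
  ultimately show ?thesis
    using regularly_varying unfolding regularly_varying_def by blast
qed

lemma emeasure_nonfinite: "emeasure \<nu> (- range ext_emb) = 0"
proof -
  let ?I = "- range ext_emb :: (ereal^'d) set"
  have I: "?I \<in> sets borel"
    by measurable
  have "?I \<subseteq> cube_exterior 1"
  proof
    fix y
    assume "y \<in> ?I"
    then have "\<not> (\<forall>i. \<bar>y $ i\<bar> \<noteq> \<infinity>)"
      unfolding range_ext_emb by simp
    then obtain i where "\<bar>y $ i\<bar> = \<infinity>"
      by metis
    then show "y \<in> cube_exterior 1"
      unfolding cube_exterior_def by (intro CollectI exI[of _ i]) simp
  qed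
  then have "emeasure \<nu> ?I \<le> emeasure \<nu> (cube_exterior 1)"
    using cube_exterior_borel[of 1] by (intro emeasure_mono) (simp_all add: sets_tail_measure)
  then have "emeasure \<nu> ?I < \<infinity>"
    using emeasure_cube_exterior_finite[of 1] by simp
  then have m: "emeasure \<nu> ?I = ennreal (measure \<nu> ?I)"
    by (simp add: emeasure_eq_ennreal_measure)
  have hom: "\<forall>c>0. \<forall>\<Phi>\<in>sets borel. emeasure \<nu> (ext_scale c \<Phi>) = ennreal (c powr (-\<alpha>)) * emeasure \<nu> \<Phi>"
    using regularly_varying unfolding regularly_varying_def by blast
  have "emeasure \<nu> (ext_scale 2 ?I) = ennreal (2 powr (-\<alpha>)) * emeasure \<nu> ?I"
    by (rule hom[rule_format]) (simp_all add: I)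
  then have "emeasure \<nu> ?I = ennreal (2 powr (-\<alpha>)) * emeasure \<nu> ?I"
    by (simp add: ext_scale_nonfinite)
  then have "measure \<nu> ?I = 2 powr (-\<alpha>) * measure \<nu> ?I"
    unfolding m by (simp add: ennreal_mult[symmetric])
  moreover have "2 powr (-\<alpha>) < 1"
    using alpha_pos by (simp add: powr_less_one)
  ultimately have "measure \<nu> ?I = 0"
    by (metis mult_cancel_right1 order_less_irrefl)
  then show ?thesis
    using m by simp
qed

lemma AE_finite: "AE y in \<nu>. y \<in> range ext_emb"
  using emeasure_nonfinite by (intro AE_I[of _ _ "- range ext_emb"]) (auto simp: sets_tail_measure)

lemma integrable_tail_measure:
  fixes g :: "ereal^'d \<Rightarrow> real"
  assumes "g \<in> borel_measurable borel" and "0 < r"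
    and "\<And>y. \<bar>g y\<bar> \<le> B" and "\<And>y. y \<notin> cube_exterior r \<Longrightarrow> g y = 0"
  shows "integrable \<nu> g"
proof (rule Bochner_Integration.integrable_bound[where f="\<lambda>y. B * indicator (cube_exterior r) y"])
  show "integrable \<nu> (\<lambda>y. B * indicator (cube_exterior r) y :: real)"
    using emeasure_cube_exterior_finite[OF assms(2)] cube_exterior_borel[of r] assms(2)
    by (auto simp: sets_tail_measure)
  show "AE y in \<nu>. norm (g y) \<le> norm (B * indicator (cube_exterior r) y :: real)"
    using assms(3,4) by (auto simp: indicator_def intro!: order_trans[OF _ abs_ge_self])
qed (use assms(1) in measurable)

definition tail_ratio :: "nat \<Rightarrow> (real^'d \<Rightarrow> real) \<Rightarrow> real" where
  "tail_ratio n g =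
     (\<integral>\<omega>. g (inverse (real n) *\<^sub>R Y \<omega>) \<partial>M) / measure M {\<omega>\<in>space M. real n < norm (Y \<omega>)}"

lemma tail_ratio_tendsto:
  assumes h: "continuous_on UNIV h" and "0 < \<rho>" and h0: "\<And>x. norm x < \<rho> \<Longrightarrow> h x = 0"
    and "0 \<le> C" and hC: "\<And>x. h (clamp_vec C x) = h x"
  shows "(\<lambda>n. tail_ratio n h) \<longlonglongrightarrow> (\<integral>y. h (clamp_ereal_vec C y) \<partial>\<nu>)"
proof -
  let ?g = "\<lambda>y. h (clamp_ereal_vec C y)"
  define K :: "(ereal^'d) set" where "K = {y. \<rho> \<le> norm (clamp_ereal_vec C y)}"
  have "compact K"
    unfolding K_def
    by (intro compact_ereal_vec closed_Collect_le continuous_intros continuous_on_clamp_ereal_vec)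
  moreover have "0 \<notin> K"
    using \<open>0 < \<rho>\<close> \<open>0 \<le> C\<close> by (simp add: K_def clamp_ereal_vec_zero)
  moreover have "\<forall>y. y \<notin> K \<longrightarrow> ?g y = 0"
    using h0 by (auto simp: K_def)
  moreover have "continuous_on UNIV ?g"
    by (rule continuous_on_compose2[OF h continuous_on_clamp_ereal_vec]) auto
  ultimately have "((\<lambda>u. (\<integral>\<omega>. ?g (ext_emb (inverse u *\<^sub>R Y \<omega>)) \<partial>M)
                / measure M {\<omega>\<in>space M. norm (Y \<omega>) > u}) \<longlongrightarrow> (\<integral>y. ?g y \<partial>\<nu>)) at_top"
    using regularly_varying unfolding regularly_varying_def by blast
  from filterlim_compose[OF this filterlim_real_sequentially] show ?thesis
    by (simp add: o_def tail_ratio_def hC)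
qed

lemma integrable_scaled:
  fixes g :: "real^'d \<Rightarrow> real"
  assumes "g \<in> borel_measurable borel" and "\<And>x. \<bar>g x\<bar> \<le> B"
  shows "integrable M (\<lambda>\<omega>. g (c *\<^sub>R Y \<omega>))"
  by (rule integrable_const_bound[where B=B]) (use assms in auto)

lemma tail_ratio_mono:
  fixes g g' :: "real^'d \<Rightarrow> real"
  assumes "g \<in> borel_measurable borel" "g' \<in> borel_measurable borel"
    and "\<And>x. \<bar>g x\<bar> \<le> B" "\<And>x. \<bar>g' x\<bar> \<le> B" and "\<And>x. g x \<le> g' x"
  shows "tail_ratio n g \<le> tail_ratio n g'"
  unfolding tail_ratio_def
  by (intro divide_right_mono integral_mono integrable_scaled) (use assms in auto)

end

section \<open>Limits over a region bounded away from the origin\<close>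

definition outer_approx :: "real \<Rightarrow> 'a::metric_space set \<Rightarrow> 'a \<Rightarrow> real" where
  "outer_approx k S x = max 0 (1 - k * infdist x S)"

definition inner_approx :: "real \<Rightarrow> 'a::metric_space set \<Rightarrow> 'a \<Rightarrow> real" where
  "inner_approx k S x = min 1 (k * infdist x (- S))"

definition cutoff :: "real \<Rightarrow> 'a::real_normed_vector \<Rightarrow> real" where
  "cutoff R x = min 1 (max 0 (R + 2 - norm x))"

lemma continuous_on_outer_approx [continuous_intros]: "continuous_on A (outer_approx k S)"
  unfolding outer_approx_def by (intro continuous_intros)

lemma continuous_on_inner_approx [continuous_intros]: "continuous_on A (inner_approx k S)"
  unfolding inner_approx_def by (intro continuous_intros)

lemma continuous_on_cutoff [continuous_intros]: "continuous_on A (cutoff R)"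
  unfolding cutoff_def by (intro continuous_intros)

lemma outer_approx_bounds: "0 \<le> k \<Longrightarrow> 0 \<le> outer_approx k S x \<and> outer_approx k S x \<le> 1"
  using infdist_nonneg[of x S] by (auto simp: outer_approx_def)

lemma inner_approx_bounds: "0 \<le> k \<Longrightarrow> 0 \<le> inner_approx k S x \<and> inner_approx k S x \<le> 1"
  using infdist_nonneg[of x "- S"] by (auto simp: inner_approx_def)

lemma cutoff_bounds: "0 \<le> cutoff R x \<and> cutoff R x \<le> 1"
  by (auto simp: cutoff_def)

lemma outer_approx_eq_1: "x \<in> S \<Longrightarrow> outer_approx k S x = 1"
  by (simp add: outer_approx_def)

lemma inner_approx_pos_imp_mem: "0 < inner_approx k S x \<Longrightarrow> x \<in> S"
  by (cases "x \<in> S") (auto simp: inner_approx_def)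

lemma cutoff_eq_1: "norm x \<le> R + 1 \<Longrightarrow> cutoff R x = 1"
  by (simp add: cutoff_def)

lemma cutoff_eq_0: "R + 2 \<le> norm x \<Longrightarrow> cutoff R x = 0"
  by (simp add: cutoff_def)

lemma eventually_mult_ge_1:
  fixes \<kappa> :: "'a \<Rightarrow> real"
  assumes "filterlim \<kappa> at_top F" and "0 < d"
  shows "eventually (\<lambda>k. 1 \<le> \<kappa> k * d) F"
proof -
  have "eventually (\<lambda>k. 1 / d \<le> \<kappa> k) F"
    using assms(1) unfolding filterlim_at_top by blast
  then show ?thesis
    by eventually_elim (use assms(2) in \<open>simp add: field_simps\<close>)
qed

lemma outer_approx_tendsto:
  assumes "filterlim \<kappa> at_top F" and "S \<noteq> {}"
  shows "((\<lambda>k. outer_approx (\<kappa> k) S x) \<longlongrightarrow> indicator (closure S) x) F"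
proof (cases "x \<in> closure S")
  case True
  then show ?thesis
    using assms(2) by (simp add: outer_approx_def in_closure_iff_infdist_zero)
next
  case False
  then have "0 < infdist x S"
    using assms(2) in_closure_iff_infdist_zero[of S x] infdist_nonneg[of x S] by simp
  from eventually_mult_ge_1[OF assms(1) this]
  have "eventually (\<lambda>k. outer_approx (\<kappa> k) S x = 0) F"
    by eventually_elim (simp add: outer_approx_def)
  then show ?thesis
    using False by (simp add: tendsto_eventually)
qed

lemma inner_approx_tendsto:
  assumes "filterlim \<kappa> at_top F" and "S \<noteq> UNIV"
  shows "((\<lambda>k. inner_approx (\<kappa> k) S x) \<longlongrightarrow> indicator (interior S) x) F"
proof (cases "x \<in> interior S")
  case True
  then have "x \<notin> closure (- S)"
    by (simp add: closure_complement)
  moreover have "- S \<noteq> {}"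
    using assms(2) by auto
  ultimately have "0 < infdist x (- S)"
    using in_closure_iff_infdist_zero[of "- S" x] infdist_nonneg[of x "- S"] by simp
  from eventually_mult_ge_1[OF assms(1) this]
  have "eventually (\<lambda>k. inner_approx (\<kappa> k) S x = 1) F"
    by eventually_elim (simp add: inner_approx_def)
  then show ?thesis
    using True by (simp add: tendsto_eventually)
next
  case False
  then have "x \<in> closure (- S)"
    by (simp add: closure_complement)
  moreover have "- S \<noteq> {}"
    using assms(2) by auto
  ultimately show ?thesis
    using False by (simp add: inner_approx_def in_closure_iff_infdist_zero)
qed

lemma cutoff_tendsto:
  assumes "filterlim R at_top F"
  shows "((\<lambda>k. cutoff (R k) x) \<longlongrightarrow> 1) F"
proof -
  have "eventually (\<lambda>k. norm x - 1 \<le> R k) F"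
    using assms unfolding filterlim_at_top by blast
  then have "eventually (\<lambda>k. cutoff (R k) x = 1) F"
    by eventually_elim (simp add: cutoff_eq_1)
  then show ?thesis
    by (simp add: tendsto_eventually)
qed

lemma tendsto_sandwich_limits:
  fixes s :: "nat \<Rightarrow> real" and lo hi :: "nat \<Rightarrow> nat \<Rightarrow> real"
  assumes between: "\<And>k. eventually (\<lambda>n. lo k n \<le> s n \<and> s n \<le> hi k n) sequentially"
    and lo: "\<And>k. lo k \<longlonglongrightarrow> LO k" and hi: "\<And>k. hi k \<longlonglongrightarrow> HI k"
    and "LO \<longlonglongrightarrow> L" and "HI \<longlonglongrightarrow> L"
  shows "s \<longlonglongrightarrow> L"
proof (rule tendstoI)
  fix e :: real
  assume "0 < e"
  have "eventually (\<lambda>k. L - e < LO k \<and> HI k < L + e) sequentially"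
    using order_tendstoD(1)[OF assms(4), of "L - e"] order_tendstoD(2)[OF assms(5), of "L + e"] \<open>0 < e\<close>
    by (simp add: eventually_conj)
  then obtain k where k: "L - e < LO k" "HI k < L + e"
    by (auto simp: eventually_sequentially)
  have "eventually (\<lambda>n. L - e < lo k n \<and> hi k n < L + e) sequentially"
    using order_tendstoD(1)[OF lo k(1)] order_tendstoD(2)[OF hi k(2)] by (rule eventually_conj)
  with between[of k] show "eventually (\<lambda>n. dist (s n) L < e) sequentially"
    by eventually_elim (auto simp: dist_real_def abs_less_iff)
qed

locale rv_region = rv_vector M Y \<alpha> \<nu>
  for M :: "'a measure" and Y :: "'a \<Rightarrow> real^'d" and \<alpha> \<nu> +
  fixes W :: "(real^'d) set" and \<delta> :: real
  assumes W_borel [measurable]: "W \<in> sets borel" and delta_pos: "0 < \<delta>"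
    and norm_gt_delta: "\<And>x. x \<in> W \<Longrightarrow> \<delta> < norm x" and W_nonempty: "W \<noteq> {}"
    and frontier_null: "emeasure \<nu> (frontier (ext_emb ` W)) = 0"
begin

lemma AE_no_boundary:
  "AE y in \<nu>. \<exists>x. y = ext_emb x \<and> (x \<in> closure W \<longleftrightarrow> x \<in> W) \<and> (x \<in> interior W \<longleftrightarrow> x \<in> W)"
proof -
  have "frontier (ext_emb ` W) \<in> null_sets \<nu>"
    using frontier_null by (simp add: null_sets_def sets_tail_measure borel_closed)
  from AE_not_in[OF this] AE_finite show ?thesis
  proof eventually_elim
    case (elim y)
    then obtain x where "y = ext_emb x"
      by blast
    then show ?case
      using elim(1) ext_emb_in_frontier[of x W] closure_subset[of W] interior_subset[of W] by blast
  qed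
qed

lemma outer_approx_near_origin:
  assumes "norm x < \<delta> / 2" and "1 \<le> \<kappa> * (\<delta> / 2)"
  shows "outer_approx \<kappa> W x = 0"
proof -
  have dist: "\<delta> / 2 \<le> dist x w" if "w \<in> W" for w
    using norm_gt_delta[OF that] assms(1) norm_triangle_ineq2[of w x] by (simp add: dist_norm norm_minus_commute)
  have "\<delta> / 2 \<le> infdist x W"
    unfolding infdist_notempty[OF W_nonempty] by (rule cINF_greatest[OF W_nonempty dist])
  moreover have "0 < \<kappa>"
    using assms(2) delta_pos by (intro zero_less_mult_pos2[of \<kappa> "\<delta> / 2"]) auto
  ultimately have "\<kappa> * (\<delta> / 2) \<le> \<kappa> * infdist x W"
    by (intro mult_left_mono) auto
  then show ?thesis
    using assms(2) by (simp add: outer_approx_def)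
qed

end

lemma inverse_Suc_bounds: "0 < inverse (real (Suc k)) \<and> inverse (real (Suc k)) \<le> 1"
  by (simp add: field_simps)

text \<open>The tests squeeze \<open>\<psi>n n \<cdot> 1\<^sub>W\<close> as soon as \<open>\<bar>\<psi>n n - \<psi>\<bar> \<le> 1/(k+1)\<close> on the ball of
  radius \<open>k + 2\<close>. They vanish near the origin (the rate \<open>2/\<delta> + k\<close> makes the outer approximation
  vanish on the ball of radius \<open>\<delta>/2\<close>) and are unchanged by clamping to the cube of half-width
  \<open>k + 2\<close>, so regular variation applies to them; as \<open>k \<rightarrow> \<infinity>\<close> both tend to \<open>\<psi> \<cdot> 1\<^sub>W\<close> off the
  \<open>\<nu>\<close>-null boundary of \<open>W\<close>.\<close>

locale rv_region_limit = rv_region M Y \<alpha> \<nu> W \<delta>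
  for M :: "'a measure" and Y :: "'a \<Rightarrow> real^'d" and \<alpha> \<nu> W \<delta> +
  fixes \<psi>n :: "nat \<Rightarrow> real^'d \<Rightarrow> real" and \<psi> :: "real^'d \<Rightarrow> real"
  assumes psin_borel [measurable]: "\<And>n. \<psi>n n \<in> borel_measurable borel"
    and psin_bounds: "\<And>n x. 0 \<le> \<psi>n n x \<and> \<psi>n n x \<le> 1"
    and psi_cont: "continuous_on UNIV \<psi>" and psi_bounds: "\<And>x. 0 \<le> \<psi> x \<and> \<psi> x \<le> 1"
    and locally_uniform:
      "\<And>R e. 0 < e \<Longrightarrow> eventually (\<lambda>n. \<forall>x. norm x \<le> R \<longrightarrow> \<bar>\<psi>n n x - \<psi> x\<bar> \<le> e) sequentially"
begin

definition upper_test :: "nat \<Rightarrow> real^'d \<Rightarrow> real" where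
  "upper_test k x = (\<psi> x + inverse (Suc k)) * outer_approx (2 / \<delta> + k) W x * cutoff k x
     + (1 - cutoff k x)"

definition lower_test :: "nat \<Rightarrow> real^'d \<Rightarrow> real" where
  "lower_test k x = (\<psi> x - inverse (Suc k)) * inner_approx k W x * cutoff k x"

lemma continuous_on_upper_test: "continuous_on UNIV (upper_test k)"
  unfolding upper_test_def by (intro continuous_intros psi_cont)

lemma continuous_on_lower_test: "continuous_on UNIV (lower_test k)"
  unfolding lower_test_def by (intro continuous_intros psi_cont)

lemma psi_borel [measurable]: "\<psi> \<in> borel_measurable borel"
  by (rule borel_measurable_continuous_onI[OF psi_cont])

lemma upper_test_borel [measurable]: "upper_test k \<in> borel_measurable borel"
  by (rule borel_measurable_continuous_onI[OF continuous_on_upper_test])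

lemma lower_test_borel [measurable]: "lower_test k \<in> borel_measurable borel"
  by (rule borel_measurable_continuous_onI[OF continuous_on_lower_test])

lemma upper_test_bounds: "0 \<le> upper_test k x \<and> upper_test k x \<le> 2"
proof -
  define a where "a = (\<psi> x + inverse (Suc k)) * outer_approx (2 / \<delta> + k) W x"
  have "0 \<le> outer_approx (2 / \<delta> + k) W x" "outer_approx (2 / \<delta> + k) W x \<le> 1"
    using outer_approx_bounds[of "2 / \<delta> + k"] delta_pos by auto
  moreover have "0 \<le> \<psi> x + inverse (Suc k)" "\<psi> x + inverse (Suc k) \<le> 2"
    using psi_bounds[of x] inverse_Suc_bounds[of k] by auto
  ultimately have "0 \<le> a" "a \<le> 2"
    unfolding a_def by (auto intro: order_trans[OF mult_left_le])
  then have "0 \<le> a * cutoff k x" "a * cutoff k x \<le> 2 * cutoff k x"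
    using cutoff_bounds[of k x] by (auto intro: mult_right_mono)
  then show ?thesis
    using cutoff_bounds[of k x] unfolding upper_test_def a_def[symmetric] by linarith
qed

lemma lower_test_bounds: "\<bar>lower_test k x\<bar> \<le> 1"
proof -
  have "\<bar>\<psi> x - inverse (Suc k)\<bar> \<le> 1"
    using psi_bounds[of x] inverse_Suc_bounds[of k] by (smt (verit))
  moreover have "\<bar>inner_approx k W x * cutoff k x\<bar> \<le> 1"
    using inner_approx_bounds[of k W x] cutoff_bounds[of k x] by (simp add: abs_mult mult_le_one)
  ultimately show ?thesis
    unfolding lower_test_def abs_mult mult.assoc by (simp add: mult_le_one)
qed

lemma upper_test_near_origin: "norm x < min 1 (\<delta> / 2) \<Longrightarrow> upper_test k x = 0"
  using outer_approx_near_origin[of x "2 / \<delta> + k"] delta_pos cutoff_eq_1[of x k]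
  by (simp add: upper_test_def distrib_right)

lemma lower_test_near_origin: "norm x < min 1 (\<delta> / 2) \<Longrightarrow> lower_test k x = 0"
proof -
  assume "norm x < min 1 (\<delta> / 2)"
  then have "x \<notin> W"
    using norm_gt_delta[of x] delta_pos by auto
  then have "inner_approx k W x = 0"
    using inner_approx_pos_imp_mem[of k W x] inner_approx_bounds[of k W x] by fastforce
  then show ?thesis
    by (simp add: lower_test_def)
qed

lemma upper_test_clamp: "upper_test k (clamp_vec (real k + 2) x) = upper_test k x"
  by (rule clamp_vec_invariant[where c=1]) (auto simp: upper_test_def cutoff_eq_0)

lemma lower_test_clamp: "lower_test k (clamp_vec (real k + 2) x) = lower_test k x"
  by (rule clamp_vec_invariant[where c=0]) (auto simp: lower_test_def cutoff_eq_0)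

lemma lower_test_le:
  assumes close: "\<forall>x. norm x \<le> real k + 2 \<longrightarrow> \<bar>\<psi>n n x - \<psi> x\<bar> \<le> inverse (Suc k)"
  shows "lower_test k x \<le> \<psi>n n x * indicator W x"
proof (cases "0 < inner_approx k W x \<and> 0 < cutoff k x \<and> \<psi> x - inverse (Suc k) > 0")
  case True
  then have "x \<in> W" and "norm x \<le> real k + 2"
    using inner_approx_pos_imp_mem[of k W x] cutoff_eq_0[of k x] by force+
  then have "\<bar>\<psi>n n x - \<psi> x\<bar> \<le> inverse (Suc k)"
    using close by blast
  then have "\<psi> x - inverse (Suc k) \<le> \<psi>n n x * indicator W x"
    using \<open>x \<in> W\<close> by (simp add: abs_diff_le_iff)
  moreover have "(\<psi> x - inverse (Suc k)) * (inner_approx k W x * cutoff k x) \<le> \<psi> x - inverse (Suc k)"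
    using True inner_approx_bounds[of k W x] cutoff_bounds[of k x]
    by (intro mult_right_le_one_le mult_le_one) auto
  ultimately show ?thesis
    unfolding lower_test_def mult.assoc by linarith
next
  case False
  then have "inner_approx k W x * cutoff k x = 0 \<or> \<psi> x - inverse (Suc k) \<le> 0"
    using inner_approx_bounds[of k W x] cutoff_bounds[of k x] by force
  then have "lower_test k x \<le> 0"
    using inner_approx_bounds[of k W x] cutoff_bounds[of k x]
    unfolding lower_test_def mult.assoc by (auto intro: mult_nonpos_nonneg)
  moreover have "0 \<le> \<psi>n n x * indicator W x"
    using psin_bounds[of n x] by simp
  ultimately show ?thesis
    by linarith
qed

lemma le_upper_test:
  assumes close: "\<forall>x. norm x \<le> real k + 2 \<longrightarrow> \<bar>\<psi>n n x - \<psi> x\<bar> \<le> inverse (Suc k)"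
  shows "\<psi>n n x * indicator W x \<le> upper_test k x"
proof (cases "x \<in> W \<and> norm x \<le> real k + 2")
  case True
  then have "\<bar>\<psi>n n x - \<psi> x\<bar> \<le> inverse (Suc k)"
    using close by blast
  then have le: "\<psi>n n x \<le> \<psi> x + inverse (Suc k)" and "outer_approx (2 / \<delta> + k) W x = 1"
    using True outer_approx_eq_1[of x W] by (simp_all add: abs_diff_le_iff)
  moreover have "\<psi>n n x * cutoff k x \<le> (\<psi> x + inverse (Suc k)) * cutoff k x"
    using le cutoff_bounds[of k x] by (intro mult_right_mono) auto
  moreover have "\<psi>n n x * (1 - cutoff k x) \<le> 1 - cutoff k x"
    using psin_bounds[of n x] cutoff_bounds[of k x] by (intro mult_left_le_one_le) auto
  moreover have "\<psi>n n x = \<psi>n n x * cutoff k x + \<psi>n n x * (1 - cutoff k x)"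
    by (simp add: algebra_simps)
  ultimately show ?thesis
    using True unfolding upper_test_def by simp
next
  case False
  moreover have "0 \<le> upper_test k x"
    using upper_test_bounds by blast
  moreover have "\<psi>n n x * indicator W x \<le> 1"
    using psin_bounds[of n x] by (simp add: indicator_def)
  ultimately show ?thesis
    using cutoff_eq_0[of k x] by (auto simp: upper_test_def)
qed

lemma eventually_tail_ratio_between:
  "eventually (\<lambda>n. tail_ratio n (lower_test k) \<le> tail_ratio n (\<lambda>x. \<psi>n n x * indicator W x)
     \<and> tail_ratio n (\<lambda>x. \<psi>n n x * indicator W x) \<le> tail_ratio n (upper_test k)) sequentially"
  using locally_uniform[of "inverse (Suc k)" "real k + 2", OF conjunct1[OF inverse_Suc_bounds]]
proof eventually_elim
  case (elim n)
  have "\<bar>\<psi>n n x * indicator W x\<bar> \<le> 2" for x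
    using psin_bounds[of n x] by (simp add: indicator_def)
  moreover have "\<bar>lower_test k x\<bar> \<le> 2" "\<bar>upper_test k x\<bar> \<le> 2" for x
    using lower_test_bounds[of k x] upper_test_bounds[of k x] by auto
  ultimately show ?case
    using lower_test_le[OF elim] le_upper_test[OF elim] by (auto intro!: tail_ratio_mono[where B=2])
qed
end

context rv_region
begin

lemma emeasure_region_finite: "emeasure \<nu> (ext_emb ` W) < \<infinity>"
proof -
  have "ext_emb ` W \<subseteq> cube_exterior (\<delta> / CARD('d))"
    using ext_emb_in_cube_exterior norm_gt_delta by (auto intro: less_imp_le)
  then have "emeasure \<nu> (ext_emb ` W) \<le> emeasure \<nu> (cube_exterior (\<delta> / CARD('d)))"
    using cube_exterior_borel[of "\<delta> / CARD('d)"] delta_pos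
    by (intro emeasure_mono) (simp_all add: sets_tail_measure)
  also have "\<dots> < \<infinity>"
    using delta_pos by (intro emeasure_cube_exterior_finite) simp
  finally show ?thesis .
qed

lemma integral_ext_zero_indicator: "(\<integral>y. ext_zero (\<lambda>x. 1 * indicator W x) y \<partial>\<nu>) = measure \<nu> (ext_emb ` W)"
proof -
  have "ext_zero (\<lambda>x. 1 * indicator W x) = indicator (ext_emb ` W)"
  proof
    fix y :: "ereal^'d"
    show "ext_zero (\<lambda>x. 1 * indicator W x) y = indicator (ext_emb ` W) y"
      by (cases "y \<in> range ext_emb") (auto simp: indicator_def inj_image_mem_iff[OF inj_ext_emb])
  qed
  then show ?thesis
    by simp
qed

lemma integral_clamped_tendsto:
  fixes h :: "nat \<Rightarrow> real^'d \<Rightarrow> real"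
  assumes [measurable]: "\<And>k. h k \<in> borel_measurable borel" "g \<in> borel_measurable borel"
    and bound: "\<And>k x. \<bar>h k x\<bar> \<le> B" and "0 < \<rho>" and small: "\<And>k x. norm x < \<rho> \<Longrightarrow> h k x = 0"
    and C: "\<And>k. 0 \<le> C k" and clamp: "\<And>k x. h k (clamp_vec (C k) x) = h k x"
    and lim: "\<And>x. (x \<in> closure W \<longleftrightarrow> x \<in> W) \<Longrightarrow> (x \<in> interior W \<longleftrightarrow> x \<in> W) \<Longrightarrow>
      (\<lambda>k. h k x) \<longlonglongrightarrow> g x"
  shows "(\<lambda>k. \<integral>y. h k (clamp_ereal_vec (C k) y) \<partial>\<nu>) \<longlonglongrightarrow> (\<integral>y. ext_zero g y \<partial>\<nu>)"
proof (rule integral_dominated_convergence[where w="\<lambda>y. B * indicator (cube_exterior (\<rho> / CARD('d))) y"])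
  have "0 \<le> B"
    using bound[of 0 0] by simp
  moreover have S: "cube_exterior (\<rho> / CARD('d)) \<in> sets borel"
    using \<open>0 < \<rho>\<close> by (simp add: cube_exterior_borel)
  ultimately show "integrable \<nu> (\<lambda>y. B * indicator (cube_exterior (\<rho> / CARD('d))) y)"
    using \<open>0 < \<rho>\<close>
    by (intro integrable_tail_measure[where B=B and r="\<rho> / CARD('d)"]
        borel_measurable_times borel_measurable_const borel_measurable_indicator S)
      (auto simp: indicator_def)
  show "AE y in \<nu>. norm (h k (clamp_ereal_vec (C k) y)) \<le> B * indicator (cube_exterior (\<rho> / CARD('d))) y" for k
    using clamp_ereal_vec_support[where h="h k" and C="C k", OF C bound small] by (intro AE_I2) simp
  show "AE y in \<nu>. (\<lambda>k. h k (clamp_ereal_vec (C k) y)) \<longlonglongrightarrow> ext_zero g y"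
    using AE_no_boundary by eventually_elim (auto simp: clamp intro: lim)
  show "(\<lambda>y. h k (clamp_ereal_vec (C k) y)) \<in> borel_measurable \<nu>" for k
    using borel_measurable_continuous_onI[OF continuous_on_clamp_ereal_vec] by measurable
qed measurable

end

context rv_region_limit
begin

lemma upper_test_tendsto:
  assumes "x \<in> closure W \<longleftrightarrow> x \<in> W"
  shows "(\<lambda>k. upper_test k x) \<longlonglongrightarrow> \<psi> x * indicator W x"
proof -
  have "filterlim (\<lambda>k. 2 / \<delta> + real k) at_top sequentially"
    by (rule filterlim_tendsto_add_at_top[OF tendsto_const filterlim_real_sequentially])
  then have "(\<lambda>k. upper_test k x) \<longlonglongrightarrow> (\<psi> x + 0) * indicator (closure W) x * 1 + (1 - 1)"
    unfolding upper_test_def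
    by (intro tendsto_intros LIMSEQ_inverse_real_of_nat outer_approx_tendsto W_nonempty
        cutoff_tendsto filterlim_real_sequentially)
  then show ?thesis
    using assms by (simp add: indicator_def)
qed

lemma lower_test_tendsto:
  assumes "x \<in> interior W \<longleftrightarrow> x \<in> W"
  shows "(\<lambda>k. lower_test k x) \<longlonglongrightarrow> \<psi> x * indicator W x"
proof -
  have "W \<noteq> UNIV"
    using norm_gt_delta[of 0] delta_pos by auto
  then have "(\<lambda>k. lower_test k x) \<longlonglongrightarrow> (\<psi> x - 0) * indicator (interior W) x * 1"
    unfolding lower_test_def
    by (intro tendsto_intros LIMSEQ_inverse_real_of_nat inner_approx_tendsto
        cutoff_tendsto filterlim_real_sequentially)
  then show ?thesis
    using assms by (simp add: indicator_def)
qed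

lemma tail_ratio_region_tendsto:
  "(\<lambda>n. tail_ratio n (\<lambda>x. \<psi>n n x * indicator W x))
     \<longlonglongrightarrow> (\<integral>y. ext_zero (\<lambda>x. \<psi> x * indicator W x) y \<partial>\<nu>)"
proof (rule tendsto_sandwich_limits[where lo="\<lambda>k n. tail_ratio n (lower_test k)"
      and hi="\<lambda>k n. tail_ratio n (upper_test k)"
      and LO="\<lambda>k. \<integral>y. lower_test k (clamp_ereal_vec (real k + 2) y) \<partial>\<nu>"
      and HI="\<lambda>k. \<integral>y. upper_test k (clamp_ereal_vec (real k + 2) y) \<partial>\<nu>"])
  have \<rho>: "0 < min 1 (\<delta> / 2)"
    using delta_pos by simp
  show "(\<lambda>n. tail_ratio n (upper_test k)) \<longlonglongrightarrow> (\<integral>y. upper_test k (clamp_ereal_vec (real k + 2) y) \<partial>\<nu>)" for k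
    by (rule tail_ratio_tendsto[OF continuous_on_upper_test \<rho> upper_test_near_origin _ upper_test_clamp])
      (auto intro: add_nonneg_nonneg)
  show "(\<lambda>n. tail_ratio n (lower_test k)) \<longlonglongrightarrow> (\<integral>y. lower_test k (clamp_ereal_vec (real k + 2) y) \<partial>\<nu>)" for k
    by (rule tail_ratio_tendsto[OF continuous_on_lower_test \<rho> lower_test_near_origin _ lower_test_clamp])
      (auto intro: add_nonneg_nonneg)
  show "(\<lambda>k. \<integral>y. upper_test k (clamp_ereal_vec (real k + 2) y) \<partial>\<nu>)
      \<longlonglongrightarrow> (\<integral>y. ext_zero (\<lambda>x. \<psi> x * indicator W x) y \<partial>\<nu>)"
    using upper_test_bounds \<rho> upper_test_near_origin upper_test_clamp upper_test_tendsto
    by (intro integral_clamped_tendsto[where B=2 and \<rho>="min 1 (\<delta> / 2)"]) auto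
  show "(\<lambda>k. \<integral>y. lower_test k (clamp_ereal_vec (real k + 2) y) \<partial>\<nu>)
      \<longlonglongrightarrow> (\<integral>y. ext_zero (\<lambda>x. \<psi> x * indicator W x) y \<partial>\<nu>)"
    using lower_test_bounds \<rho> lower_test_near_origin lower_test_clamp lower_test_tendsto
    by (intro integral_clamped_tendsto[where B=1 and \<rho>="min 1 (\<delta> / 2)"]) auto
  show "eventually (\<lambda>n. tail_ratio n (lower_test k) \<le> tail_ratio n (\<lambda>x. \<psi>n n x * indicator W x)
      \<and> tail_ratio n (\<lambda>x. \<psi>n n x * indicator W x) \<le> tail_ratio n (upper_test k)) sequentially" for k
    by (rule eventually_tail_ratio_between)
qed

end

context rv_vector
begin

lemma cond_exp_event_eq_tail_ratio:
  fixes g :: "real^'d \<Rightarrow> real"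
  assumes q: "measure M {\<omega>\<in>space M. real n < norm (Y \<omega>)} \<noteq> 0" and [measurable]: "S \<in> sets borel"
  shows "cond_exp_event M (\<lambda>\<omega>. g (inverse (real n) *\<^sub>R Y \<omega>)) {\<omega>\<in>space M. inverse (real n) *\<^sub>R Y \<omega> \<in> S}
    = tail_ratio n (\<lambda>x. g x * indicator S x) / tail_ratio n (indicator S)"
proof -
  let ?B = "{\<omega>\<in>space M. inverse (real n) *\<^sub>R Y \<omega> \<in> S}"
  have "?B \<in> sets M"
    by measurable
  have "(\<integral>\<omega>. indicator ?B \<omega> * g (inverse (real n) *\<^sub>R Y \<omega>) \<partial>M)
      = (\<integral>\<omega>. g (inverse (real n) *\<^sub>R Y \<omega>) * indicator S (inverse (real n) *\<^sub>R Y \<omega>) \<partial>M)"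
    by (intro Bochner_Integration.integral_cong) (auto simp: indicator_def)
  moreover have "measure M ?B = (\<integral>\<omega>. indicator S (inverse (real n) *\<^sub>R Y \<omega>) \<partial>M)"
  proof -
    have "measure M ?B = (\<integral>\<omega>. indicator ?B \<omega> \<partial>M)"
      using \<open>?B \<in> sets M\<close> by (simp add: Int_absorb2 sets.sets_into_space)
    also have "\<dots> = (\<integral>\<omega>. indicator S (inverse (real n) *\<^sub>R Y \<omega>) \<partial>M)"
      by (intro Bochner_Integration.integral_cong) (auto simp: indicator_def)
    finally show ?thesis .
  qed
  ultimately show ?thesis
    using q by (simp add: cond_exp_event_def tail_ratio_def)
qed

end

context rv_region
begin

lemma cond_exp_event_region_tendsto:
  fixes \<psi>n :: "nat \<Rightarrow> real^'d \<Rightarrow> real" and \<psi> :: "real^'d \<Rightarrow> real"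
  assumes "\<And>n. \<psi>n n \<in> borel_measurable borel" and "\<And>n x. 0 \<le> \<psi>n n x \<and> \<psi>n n x \<le> 1"
    and "continuous_on UNIV \<psi>" and "\<And>x. 0 \<le> \<psi> x \<and> \<psi> x \<le> 1"
    and "\<And>R e. 0 < e \<Longrightarrow> eventually (\<lambda>n. \<forall>x. norm x \<le> R \<longrightarrow> \<bar>\<psi>n n x - \<psi> x\<bar> \<le> e) sequentially"
    and pos: "0 < emeasure \<nu> (ext_emb ` W)"
  shows "(\<lambda>n. cond_exp_event M (\<lambda>\<omega>. \<psi>n n (inverse (real n) *\<^sub>R Y \<omega>))
      {\<omega>\<in>space M. inverse (real n) *\<^sub>R Y \<omega> \<in> W})
    \<longlonglongrightarrow> (\<integral>y. ext_zero (\<lambda>x. \<psi> x * indicator W x) y \<partial>\<nu>) / measure \<nu> (ext_emb ` W)"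
proof -
  interpret num: rv_region_limit M Y \<alpha> \<nu> W \<delta> \<psi>n \<psi>
    by unfold_locales (fact assms)+
  interpret den: rv_region_limit M Y \<alpha> \<nu> W \<delta> "\<lambda>_ _. 1" "\<lambda>_. 1"
    by unfold_locales auto
  have den_lim: "(\<lambda>n. tail_ratio n (indicator W)) \<longlonglongrightarrow> measure \<nu> (ext_emb ` W)"
    using den.tail_ratio_region_tendsto by (simp add: integral_ext_zero_indicator[simplified])
  have "0 < measure \<nu> (ext_emb ` W)"
    using pos emeasure_region_finite by (simp add: measure_def enn2real_positive_iff)
  with den_lim have "eventually (\<lambda>n. 0 < tail_ratio n (indicator W)) sequentially"
    by (rule order_tendstoD)
  then have "eventually (\<lambda>n. tail_ratio n (\<lambda>x. \<psi>n n x * indicator W x) / tail_ratio n (indicator W)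
      = cond_exp_event M (\<lambda>\<omega>. \<psi>n n (inverse (real n) *\<^sub>R Y \<omega>)) {\<omega>\<in>space M. inverse (real n) *\<^sub>R Y \<omega> \<in> W})
      sequentially"
    by eventually_elim (auto simp: cond_exp_event_eq_tail_ratio tail_ratio_def)
  moreover have "(\<lambda>n. tail_ratio n (\<lambda>x. \<psi>n n x * indicator W x) / tail_ratio n (indicator W))
      \<longlonglongrightarrow> (\<integral>y. ext_zero (\<lambda>x. \<psi> x * indicator W x) y \<partial>\<nu>) / measure \<nu> (ext_emb ` W)"
    using num.tail_ratio_region_tendsto den_lim \<open>0 < measure \<nu> (ext_emb ` W)\<close>
    by (intro tendsto_divide) auto
  ultimately show ?thesis
    by (rule Lim_transform_eventually[rotated])
qed

end

lemma eventually_uniformly_close: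
  fixes g :: "real \<Rightarrow> 'b::euclidean_space \<Rightarrow> real"
  assumes g: "continuous_on UNIV (\<lambda>(t, x). g t x)" and tn: "tn \<longlonglongrightarrow> t" and "0 < e"
  shows "eventually (\<lambda>n. \<forall>x. norm x \<le> R \<longrightarrow> \<bar>g (tn n) x - g t x\<bar> \<le> e) sequentially"
proof -
  let ?S = "cball t 1 \<times> cball 0 R"
  have "uniformly_continuous_on ?S (\<lambda>(t, x). g t x)"
    by (intro compact_uniformly_continuous continuous_on_subset[OF g] compact_Times compact_cball) auto
  then obtain d where "0 < d"
    and d: "\<And>p p'. p \<in> ?S \<Longrightarrow> p' \<in> ?S \<Longrightarrow> dist p' p < d \<Longrightarrow>
      dist ((\<lambda>(t, x). g t x) p') ((\<lambda>(t, x). g t x) p) < e"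
    unfolding uniformly_continuous_on_def using \<open>0 < e\<close> by metis
  have "eventually (\<lambda>n. dist (tn n) t < min d 1) sequentially"
    using tn \<open>0 < d\<close> by (intro tendstoD) auto
  then show ?thesis
  proof eventually_elim
    case (elim n)
    have "dist (g (tn n) x) (g t x) < e" if "norm x \<le> R" for x
      using d[of "(t, x)" "(tn n, x)"] that elim by (auto simp: dist_commute dist_Pair_Pair)
    then show ?case
      by (auto simp: dist_real_def intro: less_imp_le)
  qed
qed

lemma cond_exp_event_bounds:
  assumes "prob_space M" and [measurable]: "g \<in> borel_measurable M"
    and "\<And>\<omega>. \<omega> \<in> space M \<Longrightarrow> 0 \<le> g \<omega> \<and> g \<omega> \<le> 1"
  shows "0 \<le> cond_exp_event M g B \<and> cond_exp_event M g B \<le> 1"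
proof (cases "B \<in> sets M")
  case True
  interpret prob_space M
    by (fact assms(1))
  have "integrable M (\<lambda>\<omega>. indicator B \<omega> * g \<omega>)"
    using True assms(3) by (intro integrable_const_bound[where B=1]) (auto simp: indicator_def)
  moreover have "integrable M (\<lambda>\<omega>. indicator B \<omega> :: real)"
    using True by (intro integrable_const_bound[where B=1]) auto
  ultimately have "(\<integral>\<omega>. indicator B \<omega> * g \<omega> \<partial>M) \<le> (\<integral>\<omega>. indicator B \<omega> \<partial>M)"
    using assms(3) by (intro integral_mono) (auto simp: indicator_def)
  moreover have "0 \<le> (\<integral>\<omega>. indicator B \<omega> * g \<omega> \<partial>M)"
    using assms(3) by (intro integral_nonneg_AE) (auto simp: indicator_def)
  ultimately show ?thesis
    using True by (auto simp: cond_exp_event_def divide_le_eq_1 Int_absorb2 sets.sets_into_space)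
next
  case False
  then show ?thesis
    by (simp add: cond_exp_event_def measure_notin_sets)
qed

lemma cond_exp_event_distr_eq:
  assumes [measurable]: "X \<in> borel_measurable M" "X' \<in> borel_measurable M"
    and "distr M borel X = distr M borel X'"
    and [measurable]: "g \<in> borel_measurable borel" "S \<in> sets borel"
  shows "cond_exp_event M (\<lambda>\<omega>. g (X \<omega>)) {\<omega>\<in>space M. X \<omega> \<in> S}
    = cond_exp_event M (\<lambda>\<omega>. g (X' \<omega>)) {\<omega>\<in>space M. X' \<omega> \<in> S}"
proof -
  have int: "(\<integral>\<omega>. h (X \<omega>) \<partial>M) = (\<integral>\<omega>. h (X' \<omega>) \<partial>M)" if [measurable]: "h \<in> borel_measurable borel"
    for h :: "_ \<Rightarrow> real"
    using integral_distr[of X M borel h] integral_distr[of X' M borel h] assms(3) by simp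
  have ind: "indicator {\<omega>\<in>space M. Z \<omega> \<in> S} \<omega> = indicator S (Z \<omega>)" if "\<omega> \<in> space M" for Z \<omega>
    using that by (simp add: indicator_def)
  have "(\<integral>\<omega>. indicator {\<omega>\<in>space M. X \<omega> \<in> S} \<omega> * g (X \<omega>) \<partial>M)
      = (\<integral>\<omega>. indicator S (X \<omega>) * g (X \<omega>) \<partial>M)"
    by (intro Bochner_Integration.integral_cong) (simp_all add: ind)
  also have "\<dots> = (\<integral>\<omega>. indicator S (X' \<omega>) * g (X' \<omega>) \<partial>M)"
    by (rule int) measurable
  also have "\<dots> = (\<integral>\<omega>. indicator {\<omega>\<in>space M. X' \<omega> \<in> S} \<omega> * g (X' \<omega>) \<partial>M)"
    by (intro Bochner_Integration.integral_cong) (simp_all add: ind)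
  moreover have "measure M {\<omega>\<in>space M. Z \<omega> \<in> S} = measure (distr M borel Z) S"
    if "Z \<in> borel_measurable M" for Z
    using measure_distr[OF that assms(5)] by (simp add: vimage_def Int_def conj_commute)
  ultimately show ?thesis
    using assms(3) by (simp add: cond_exp_event_def)
qed

section \<open>Riemann averages\<close>

lemma sum_grid_indicator_eq:
  fixes c :: "nat \<Rightarrow> real"
  assumes n: "0 < n" and t: "0 \<le> t" "t < 1"
  shows "(\<Sum>i<n. c i * indicator {real i / real n ..< real (Suc i) / real n} t) = c (nat \<lfloor>real n * t\<rfloor>)"
proof -
  let ?m = "nat \<lfloor>real n * t\<rfloor>"
  have ind: "indicator {real i / real n ..< real (Suc i) / real n} t = (if i = ?m then 1 else 0 :: real)" for i
  proof -
    have "t \<in> {real i / real n ..< real (Suc i) / real n} \<longleftrightarrow> real i \<le> real n * t \<and> real n * t < real i + 1"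
      using n by (auto simp: field_simps)
    also have "\<dots> \<longleftrightarrow> \<lfloor>real n * t\<rfloor> = int i"
      by (simp add: floor_eq_iff)
    also have "\<dots> \<longleftrightarrow> i = ?m"
      using t by auto
    finally show ?thesis
      by (simp add: indicator_def)
  qed
  have "real n * t < real n"
    using n t by simp
  then have "?m < n"
    using t by (simp add: nat_less_iff floor_less_iff)
  have "(\<Sum>i<n. c i * indicator {real i / real n ..< real (Suc i) / real n} t) = (\<Sum>i<n. if i = ?m then c i else 0)"
    by (intro sum.cong refl) (subst ind, simp)
  also have "\<dots> = c ?m"
    using \<open>?m < n\<close> by (subst sum.delta) auto
  finally show ?thesis .
qed

lemma integral_uniform_grid:
  fixes c :: "nat \<Rightarrow> real"
  assumes n: "0 < n"
  shows "(\<integral>t. (\<Sum>i<n. c i * indicator {real i / real n ..< real (Suc i) / real n} t)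
      \<partial>uniform_measure lborel {0..1}) = (\<Sum>i<n. c i) / real n"
proof -
  have m: "measure (uniform_measure lborel {0..1}) {real i / real n ..< real (Suc i) / real n} = 1 / real n"
    if "i < n" for i
  proof -
    have "0 \<le> real i / real n" "real (Suc i) / real n \<le> 1"
      using that by simp_all
    then have "{real i / real n ..< real (Suc i) / real n} \<subseteq> {0..1}"
      unfolding subset_iff atLeastLessThan_iff atLeastAtMost_iff by (intro allI impI conjI; linarith)
    then have "{0..1} \<inter> {real i / real n ..< real (Suc i) / real n} = {real i / real n ..< real (Suc i) / real n}"
      by blast
    moreover have "real i / real n \<le> real (Suc i) / real n"
      using n by (simp add: divide_right_mono)
    ultimately show ?thesis
      by (simp add: measure_uniform_measure diff_divide_distrib[symmetric])
  qed
  interpret U: prob_space "uniform_measure lborel {0..1::real}"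
    by (rule prob_space_uniform_measure) auto
  have fin: "emeasure (uniform_measure lborel {0..1::real}) S < \<infinity>" for S
    using less_top[THEN iffD1, OF U.emeasure_finite] by (simp add: infinity_ennreal_def)
  have "integrable (uniform_measure lborel {0..1}) (indicator {a..<b::real} :: real \<Rightarrow> real)" for a b
    by (intro integrable_real_indicator fin) simp
  then have "(\<integral>t. (\<Sum>i<n. c i * indicator {real i / real n ..< real (Suc i) / real n} t)
      \<partial>uniform_measure lborel {0..1})
      = (\<Sum>i<n. c i * measure (uniform_measure lborel {0..1}) {real i / real n ..< real (Suc i) / real n})"
    by (subst Bochner_Integration.integral_sum) (auto intro!: sum.cong)
  also have "\<dots> = (\<Sum>i<n. c i / real n)"
    by (intro sum.cong refl) (subst m; simp)
  finally show ?thesis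
    by (simp add: sum_divide_distrib)
qed

lemma floor_mult_div_tendsto: "(\<lambda>n. real_of_int \<lfloor>real n * t\<rfloor> / real n) \<longlonglongrightarrow> t"
proof (rule tendsto_sandwich[where f="\<lambda>n. t - 1 / real n" and h="\<lambda>n. t"])
  show "eventually (\<lambda>n. t - 1 / real n \<le> real_of_int \<lfloor>real n * t\<rfloor> / real n) sequentially"
    using eventually_gt_at_top[of "0::nat"]
  proof eventually_elim
    case (elim n)
    have "(real n * t - 1) / real n \<le> real_of_int \<lfloor>real n * t\<rfloor> / real n"
      using elim by (intro divide_right_mono) linarith+
    then show ?case
      using elim by (simp add: diff_divide_distrib)
  qed
  show "eventually (\<lambda>n. real_of_int \<lfloor>real n * t\<rfloor> / real n \<le> t) sequentially"
    using eventually_gt_at_top[of "0::nat"]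
  proof eventually_elim
    case (elim n)
    have "real_of_int \<lfloor>real n * t\<rfloor> \<le> real n * t"
      by linarith
    then show ?case
      using elim by (simp add: divide_le_eq mult.commute)
  qed
  show "(\<lambda>n. t - 1 / real n) \<longlonglongrightarrow> t"
    using tendsto_diff[OF tendsto_const[of t] lim_inverse_n'] by simp
qed simp

lemma riemann_average_tendsto:
  fixes F :: "nat \<Rightarrow> real \<Rightarrow> real" and G :: "real \<Rightarrow> real"
  assumes bound: "\<And>n t. \<bar>F n t\<bar> \<le> B" and [measurable]: "G \<in> borel_measurable borel"
    and lim: "\<And>tn t. 0 \<le> t \<Longrightarrow> t < 1 \<Longrightarrow> tn \<longlonglongrightarrow> t \<Longrightarrow> (\<lambda>n. F n (tn n)) \<longlonglongrightarrow> G t"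
  shows "(\<lambda>n. (\<Sum>i<n. F n (real i / real n)) / real n) \<longlonglongrightarrow> (\<integral>t. G t \<partial>uniform_measure lborel {0..1})"
proof -
  let ?U = "uniform_measure lborel {0..1::real}"
  interpret U: prob_space ?U
    by (rule prob_space_uniform_measure) auto
  define H where "H n t = (\<Sum>i<n. F n (real i / real n) * indicator {real i / real n ..< real (Suc i) / real n} t)"
    for n t
  have H: "H n t = F n (real_of_int \<lfloor>real n * t\<rfloor> / real n)" if "0 < n" "0 \<le> t" "t < 1" for n t
    using sum_grid_indicator_eq[OF that, of "\<lambda>i. F n (real i / real n)"] that by (simp add: H_def)
  have "0 \<le> B"
    using bound[of 0 0] by (meson abs_ge_zero order_trans)
  have AE: "AE t in ?U. 0 \<le> t \<and> t < 1"
    by (intro AE_uniform_measureI) (auto intro: eventually_mono[OF AE_lborel_singleton[of 1]])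
  have "(\<lambda>n. \<integral>t. H n t \<partial>?U) \<longlonglongrightarrow> (\<integral>t. G t \<partial>?U)"
  proof (rule integral_dominated_convergence[where w="\<lambda>_. B"])
    show "integrable ?U (\<lambda>_. B)"
      by simp
    show "AE t in ?U. (\<lambda>n. H n t) \<longlonglongrightarrow> G t"
      using AE
    proof eventually_elim
      case (elim t)
      have "eventually (\<lambda>n. F n (real_of_int \<lfloor>real n * t\<rfloor> / real n) = H n t) sequentially"
        using eventually_gt_at_top[of 0] by eventually_elim (use elim in \<open>simp add: H\<close>)
      with lim[OF _ _ floor_mult_div_tendsto] elim show ?case
        by (blast intro: Lim_transform_eventually)
    qed
    show "AE t in ?U. norm (H n t) \<le> B" for n
      using AE
    proof eventually_elim
      case (elim t)
      then show ?case
        using \<open>0 \<le> B\<close> bound H[of n t] by (cases "n = 0") (auto simp: H_def)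
    qed
    have "borel_measurable ?U = borel_measurable borel"
      by (intro measurable_cong_sets) simp_all
    then show "G \<in> borel_measurable ?U" "H n \<in> borel_measurable ?U" for n
      unfolding H_def by measurable
  qed
  moreover have "eventually (\<lambda>n. (\<integral>t. H n t \<partial>?U) = (\<Sum>i<n. F n (real i / real n)) / real n) sequentially"
    using eventually_gt_at_top[of 0] unfolding H_def by eventually_elim (rule integral_uniform_grid)
  ultimately show ?thesis
    by (rule Lim_transform_eventually)
qed

section \<open>The failure set and the limit law\<close>

lemma matrix_inv_cancel:
  fixes A :: "real^'d^'d"
  assumes "invertible A"
  shows "A *v (matrix_inv A *v y) = y" and "matrix_inv A *v (A *v x) = x"
proof -
  have "A ** matrix_inv A = mat 1 \<and> matrix_inv A ** A = mat 1"
    using assms unfolding invertible_def matrix_inv_def by (rule someI_ex)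
  then show "A *v (matrix_inv A *v y) = y" "matrix_inv A *v (A *v x) = x"
    by (simp_all add: matrix_vector_mul_assoc)
qed

lemma image_matrix_inv:
  fixes A :: "real^'d^'d"
  assumes "invertible A"
  shows "(\<lambda>y. matrix_inv A *v y) ` S = {x. A *v x \<in> S}"
  using matrix_inv_cancel[OF assms] by (auto simp: image_iff) metis

lemma scaled_preimage_iff:
  fixes A :: "real^'d^'d"
  assumes "invertible A" and "0 < c"
  shows "A *v z \<in> (\<lambda>y. c *\<^sub>R y) ` \<Gamma> \<longleftrightarrow> inverse c *\<^sub>R z \<in> (\<lambda>y. matrix_inv A *v y) ` \<Gamma>"
proof -
  have "A *v z \<in> (\<lambda>y. c *\<^sub>R y) ` \<Gamma> \<longleftrightarrow> inverse c *\<^sub>R (A *v z) \<in> \<Gamma>"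
    using assms(2) by (auto simp: image_iff intro: bexI[of _ "inverse c *\<^sub>R (A *v z)"])
  then show ?thesis
    by (simp add: image_matrix_inv[OF assms(1)] matrix_vector_mult_scaleR)
qed

lemma sets_scaled_failure_set:
  fixes A :: "real^'d^'d"
  assumes "invertible A" and "0 < c" and [measurable]: "\<Gamma> \<in> sets borel"
  shows "{z. A *v z \<in> (\<lambda>y. c *\<^sub>R y) ` \<Gamma>} \<in> sets borel"
proof -
  have "(\<lambda>z. A *v (inverse c *\<^sub>R z)) \<in> borel_measurable borel"
    by (intro borel_measurable_continuous_onI continuous_on_compose2[OF matrix_vector_mult_linear_continuous_on])
      (auto intro: continuous_intros)
  then have "{z. A *v (inverse c *\<^sub>R z) \<in> \<Gamma>} \<in> sets borel"
    by measurable
  then show ?thesis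
    by (simp add: scaled_preimage_iff[OF assms(1,2)] image_matrix_inv[OF assms(1)])
qed

lemma borel_measurable_matrix_vector_mult [measurable]:
  "(\<lambda>x. (A :: real^'d^'d) *v x) \<in> borel_measurable borel"
  by (intro borel_measurable_continuous_onI matrix_vector_mult_linear_continuous_on)

lemma emeasure_distr_normalized_density:
  assumes [measurable]: "V \<in> sets M" "T \<in> measurable M N" "B \<in> sets N"
    and pos: "0 < emeasure M V" and fin: "emeasure M V < \<infinity>"
  shows "emeasure (distr (density M (\<lambda>y. ennreal (indicator V y / measure M V))) N T) B
    = emeasure M (V \<inter> T -` B) / emeasure M V"
proof -
  have VTB: "V \<inter> T -` B = V \<inter> (T -` B \<inter> space M)"
    using sets.sets_into_space[OF assms(1)] by blast
  have "emeasure M (V \<inter> T -` B) \<le> emeasure M V"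
    unfolding VTB by (intro emeasure_mono) auto
  then have fin': "emeasure M (V \<inter> T -` B) < \<infinity>"
    using fin by simp
  have "0 < measure M V"
    using pos fin by (simp add: measure_def enn2real_positive_iff)
  have "emeasure (distr (density M (\<lambda>y. ennreal (indicator V y / measure M V))) N T) B
      = (\<integral>\<^sup>+y. ennreal (indicator V y / measure M V) * indicator (T -` B \<inter> space M) y \<partial>M)"
    by (subst emeasure_distr) (simp_all add: emeasure_density)
  also have "\<dots> = (\<integral>\<^sup>+y. ennreal (1 / measure M V) * indicator (V \<inter> T -` B) y \<partial>M)"
    by (intro nn_integral_cong) (auto simp: indicator_def)
  also have "\<dots> = emeasure M (V \<inter> T -` B) / emeasure M V"
    using \<open>0 < measure M V\<close> fin fin' unfolding VTB
    by (simp add: nn_integral_cmult_indicator emeasure_eq_ennreal_measure divide_ennreal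
        ennreal_mult''[symmetric] less_top)
  finally show ?thesis .
qed

lemma distr_failure_law:
  fixes \<nu> :: "(ereal^'d) measure" and A :: "real^'d^'d" and X :: "'b \<Rightarrow> real^'d"
    and \<Gamma> :: "(real^'d) set"
  defines "V \<equiv> ext_emb ` ((\<lambda>y. matrix_inv A *v y) ` \<Gamma>)"
  assumes sets_nu: "sets \<nu> = sets borel" and inv: "invertible A" and [measurable]: "\<Gamma> \<in> sets borel"
    and pos: "0 < emeasure \<nu> V" and fin: "emeasure \<nu> V < \<infinity>"
    and law: "\<And>B. B \<in> sets borel \<Longrightarrow>
      emeasure (distr N borel X) B = emeasure \<nu> (ext_emb ` ((\<lambda>y. matrix_inv A *v y) ` (B \<inter> \<Gamma>))) / emeasure \<nu> V"
  shows "distr N borel X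
    = distr (density \<nu> (\<lambda>y. ennreal (indicator V y / measure \<nu> V))) borel (\<lambda>y. A *v vec_real_of_ereal y)"
proof (rule measure_eqI)
  fix B :: "(real^'d) set"
  assume "B \<in> sets (distr N borel X)"
  then have [measurable]: "B \<in> sets borel"
    by simp
  have V_eq: "V = ext_emb ` {x. A *v x \<in> \<Gamma>}"
    unfolding V_def image_matrix_inv[OF inv] ..
  have "V \<in> sets \<nu>"
    unfolding V_eq sets_nu by measurable
  moreover have "(\<lambda>y. A *v vec_real_of_ereal y) \<in> borel_measurable \<nu>"
    unfolding measurable_cong_sets[OF sets_nu refl] by measurable
  moreover have "V \<inter> (\<lambda>y. A *v vec_real_of_ereal y) -` B = ext_emb ` ((\<lambda>y. matrix_inv A *v y) ` (B \<inter> \<Gamma>))"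
    unfolding V_eq image_matrix_inv[OF inv] by auto
  ultimately show "emeasure (distr N borel X) B = emeasure (distr (density \<nu> (\<lambda>y. ennreal (indicator V y
      / measure \<nu> V))) borel (\<lambda>y. A *v vec_real_of_ereal y)) B"
    using law pos fin by (simp add: emeasure_distr_normalized_density)
qed simp

lemma measurable_pair_borel_cong:
  assumes "sets M1 = sets borel" and "sets M2 = sets borel"
  shows "measurable (M1 \<Otimes>\<^sub>M M2) N
    = measurable (borel :: ('a::second_countable_topology \<times> 'b::second_countable_topology) measure) N"
proof -
  have "sets (M1 \<Otimes>\<^sub>M M2) = sets (borel \<Otimes>\<^sub>M borel :: ('a \<times> 'b) measure)"
    using assms by (rule sets_pair_measure_cong)
  also have "\<dots> = sets (borel :: ('a \<times> 'b) measure)"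
    by (simp only: borel_prod)
  finally show ?thesis
    by (rule measurable_cong_sets[OF _ refl])
qed

lemma borel_measurable_integral_distr:
  fixes X :: "'b \<Rightarrow> 'c::second_countable_topology" and g :: "real \<Rightarrow> 'c \<Rightarrow> real"
  assumes "prob_space N" and "X \<in> borel_measurable N" and "(\<lambda>(t, x). g t x) \<in> borel_measurable borel"
  shows "(\<lambda>t. \<integral>x. g t x \<partial>distr N borel X) \<in> borel_measurable borel"
proof -
  interpret PX: prob_space "distr N borel X"
    using assms(1,2) by (rule prob_space.prob_space_distr)
  have "case_prod g \<in> borel_measurable (borel \<Otimes>\<^sub>M distr N borel X)"
    using assms(3) by (simp add: measurable_pair_borel_cong)
  then show ?thesis
    by (rule PX.borel_measurable_lebesgue_integral)
qed

lemma integral_indep_pair: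
  fixes U :: "'b \<Rightarrow> real" and X :: "'b \<Rightarrow> 'c::second_countable_topology" and g :: "real \<Rightarrow> 'c \<Rightarrow> real"
  assumes "prob_space N" and [measurable]: "U \<in> borel_measurable N" "X \<in> borel_measurable N"
    and indep: "distr N borel (\<lambda>\<omega>. (U \<omega>, X \<omega>)) = distr N borel U \<Otimes>\<^sub>M distr N borel X"
    and g [measurable]: "(\<lambda>(t, x). g t x) \<in> borel_measurable borel" and bound: "\<And>t x. \<bar>g t x\<bar> \<le> B"
  shows "(\<integral>\<omega>. g (U \<omega>) (X \<omega>) \<partial>N) = (\<integral>t. (\<integral>x. g t x \<partial>distr N borel X) \<partial>distr N borel U)"
proof -
  interpret N: prob_space N
    by (fact assms(1))
  interpret PU: prob_space "distr N borel U"
    by (rule N.prob_space_distr) simp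
  interpret PX: prob_space "distr N borel X"
    by (rule N.prob_space_distr) simp
  interpret P: pair_prob_space "distr N borel U" "distr N borel X" ..
  have gP: "case_prod g \<in> borel_measurable (distr N borel U \<Otimes>\<^sub>M distr N borel X)"
    using g by (simp add: measurable_pair_borel_cong)
  have "(\<integral>\<omega>. g (U \<omega>) (X \<omega>) \<partial>N) = (\<integral>p. case_prod g p \<partial>distr N borel (\<lambda>\<omega>. (U \<omega>, X \<omega>)))"
    by (subst integral_distr) simp_all
  also have "\<dots> = (\<integral>p. case_prod g p \<partial>(distr N borel U \<Otimes>\<^sub>M distr N borel X))"
    by (simp add: indep)
  also have "\<dots> = (\<integral>t. (\<integral>x. g t x \<partial>distr N borel X) \<partial>distr N borel U)"
  proof -
    have "integrable (distr N borel U \<Otimes>\<^sub>M distr N borel X) (case_prod g)"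
      using bound gP by (intro P.integrable_const_bound[where B=B]) auto
    from P.integral_fst'[OF this] show ?thesis
      by simp
  qed
  finally show ?thesis .
qed

lemma rv_region_failure_set:
  fixes A :: "real^'d^'d"
  assumes rv: "rv_vector M Y \<alpha> \<nu>" and inv: "invertible A" and adm: "admissible_failure_set \<nu> A \<Gamma>"
  obtains \<delta> where "rv_region M Y \<alpha> \<nu> ((\<lambda>y. matrix_inv A *v y) ` \<Gamma>) \<delta>"
proof -
  obtain \<delta>0 where [measurable]: "\<Gamma> \<in> sets borel" and "0 < \<delta>0" "\<Gamma> \<subseteq> {y. norm y > \<delta>0}"
    and pos: "emeasure \<nu> (ext_emb ` ((\<lambda>y. matrix_inv A *v y) ` \<Gamma>)) > 0"
    and null: "emeasure \<nu> (frontier (ext_emb ` ((\<lambda>y. matrix_inv A *v y) ` \<Gamma>))) = 0"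
    using adm unfolding admissible_failure_set_def by blast
  obtain K where "0 < K" and K: "\<And>x. norm (A *v x) \<le> norm x * K"
    using bounded_linear.pos_bounded[OF matrix_vector_mul_bounded_linear[of A]] by blast
  have "\<delta>0 / K < norm x" if "x \<in> (\<lambda>y. matrix_inv A *v y) ` \<Gamma>" for x
  proof -
    have "\<delta>0 < norm x * K"
      using that K[of x] \<open>\<Gamma> \<subseteq> _\<close> by (auto simp: image_matrix_inv[OF inv])
    then show ?thesis
      using \<open>0 < K\<close> by (simp add: field_simps)
  qed
  moreover have "(\<lambda>y. matrix_inv A *v y) ` \<Gamma> \<in> sets borel"
    unfolding image_matrix_inv[OF inv] by measurable
  ultimately have "rv_region M Y \<alpha> \<nu> ((\<lambda>y. matrix_inv A *v y) ` \<Gamma>) (\<delta>0 / K)"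
    using rv pos null \<open>0 < \<delta>0\<close> \<open>0 < K\<close> by (intro rv_region.intro rv_region_axioms.intro) auto
  then show ?thesis
    by (rule that)
qed

lemma integral_distr_failure_law:
  fixes \<nu> :: "(ereal^'d) measure" and A :: "real^'d^'d" and X :: "'b \<Rightarrow> real^'d"
    and \<Gamma> :: "(real^'d) set" and g :: "real^'d \<Rightarrow> real"
  defines "W \<equiv> (\<lambda>y. matrix_inv A *v y) ` \<Gamma>"
  assumes rv: "rv_vector M Y \<alpha> \<nu>" and inv: "invertible A" and adm: "admissible_failure_set \<nu> A \<Gamma>"
    and [measurable]: "X \<in> borel_measurable N"
    and law: "\<And>B. B \<in> sets borel \<Longrightarrow>
      emeasure (distr N borel X) B = emeasure \<nu> (ext_emb ` ((\<lambda>y. matrix_inv A *v y) ` (B \<inter> \<Gamma>))) / emeasure \<nu> (ext_emb ` W)"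
    and [measurable]: "g \<in> borel_measurable borel"
  shows "(\<integral>x. g x \<partial>distr N borel X) = (\<integral>y. ext_zero (\<lambda>x. g (A *v x) * indicator W x) y \<partial>\<nu>) / measure \<nu> (ext_emb ` W)"
proof -
  obtain \<delta> where "rv_region M Y \<alpha> \<nu> W \<delta>"
    using rv_region_failure_set[OF rv inv adm] unfolding W_def .
  then interpret rv_region M Y \<alpha> \<nu> W \<delta> .
  note sets_nu = sets_tail_measure and fin = emeasure_region_finite
  have [measurable]: "\<Gamma> \<in> sets borel" and pos: "0 < emeasure \<nu> (ext_emb ` W)"
    using adm by (simp_all add: admissible_failure_set_def W_def)
  let ?T = "\<lambda>y. A *v vec_real_of_ereal y"
  have [measurable]: "W \<in> sets borel"
    unfolding W_def image_matrix_inv[OF inv] by measurable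
  have meas: "measurable \<nu> (borel :: real measure) = measurable borel borel"
    "measurable \<nu> (borel :: (real^'d) measure) = measurable borel borel"
    by (rule measurable_cong_sets[OF sets_nu refl])+
  have "(\<integral>x. g x \<partial>distr N borel X)
      = (\<integral>x. g x \<partial>distr (density \<nu> (\<lambda>y. ennreal (indicator (ext_emb ` W) y / measure \<nu> (ext_emb ` W)))) borel ?T)"
    unfolding W_def by (subst distr_failure_law[OF sets_nu inv _ pos[unfolded W_def] fin[unfolded W_def] law[unfolded W_def]]) simp_all
  also have "\<dots> = (\<integral>y. (indicator (ext_emb ` W) y / measure \<nu> (ext_emb ` W)) *\<^sub>R g (?T y) \<partial>\<nu>)"
    by (subst integral_distr) (simp_all add: integral_density meas)
  also have "\<dots> = (\<integral>y. ext_zero (\<lambda>x. g (A *v x) * indicator W x) y \<partial>\<nu>) / measure \<nu> (ext_emb ` W)"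
  proof -
    have "indicator (ext_emb ` W) y * g (?T y) = ext_zero (\<lambda>x. g (A *v x) * indicator W x) y" for y
      by (cases "y \<in> range ext_emb") (auto simp: indicator_def inj_image_mem_iff[OF inj_ext_emb])
    then show ?thesis
      by simp
  qed
  finally show ?thesis .
qed

lemma cond_exp_event_failure_tendsto:
  fixes A :: "real^'d^'d" and \<Gamma> :: "(real^'d) set" and f :: "real \<Rightarrow> real^'d \<Rightarrow> real"
  defines "W \<equiv> (\<lambda>y. matrix_inv A *v y) ` \<Gamma>"
  assumes rv: "rv_vector M Y \<alpha> \<nu>" and inv: "invertible A" and adm: "admissible_failure_set \<nu> A \<Gamma>"
    and f_nonneg: "\<And>t x. 0 \<le> f t x" and f_cont: "continuous_on UNIV (\<lambda>(t, x). f t x)"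
    and X: "X \<in> borel_measurable N"
    and law: "\<And>B. B \<in> sets borel \<Longrightarrow>
      emeasure (distr N borel X) B = emeasure \<nu> (ext_emb ` ((\<lambda>y. matrix_inv A *v y) ` (B \<inter> \<Gamma>))) / emeasure \<nu> (ext_emb ` W)"
    and tn: "tn \<longlonglongrightarrow> t"
  shows "(\<lambda>n. cond_exp_event M (\<lambda>\<omega>. exp (- f (tn n) (inverse (real n) *\<^sub>R (A *v Y \<omega>))))
      {\<omega>\<in>space M. A *v Y \<omega> \<in> (\<lambda>y. real n *\<^sub>R y) ` \<Gamma>})
    \<longlonglongrightarrow> (\<integral>x. exp (- f t x) \<partial>distr N borel X)"
proof -
  obtain \<delta> where "rv_region M Y \<alpha> \<nu> W \<delta>"
    using rv_region_failure_set[OF rv inv adm] unfolding W_def .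
  then interpret rv_region M Y \<alpha> \<nu> W \<delta> .
  define \<phi> where "\<phi> t x = exp (- f t (A *v x))" for t x
  have "continuous_on UNIV (\<lambda>p::real \<times> (real^'d). (fst p, A *v snd p))"
    by (intro continuous_intros continuous_on_compose2[OF matrix_vector_mult_linear_continuous_on]) auto
  from continuous_on_compose2[OF f_cont this]
  have \<phi>_cont: "continuous_on UNIV (\<lambda>(t, x). \<phi> t x)"
    unfolding \<phi>_def case_prod_beta' by (auto intro: continuous_intros)
  have "continuous_on UNIV (\<phi> s)" for s
    by (rule continuous_on_compose2[OF \<phi>_cont, of UNIV "\<lambda>x. (s, x)", simplified]) (intro continuous_intros)
  moreover have "0 \<le> \<phi> s x \<and> \<phi> s x \<le> 1" for s x
    using f_nonneg[of s "A *v x"] by (simp add: \<phi>_def)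
  moreover have "0 < emeasure \<nu> (ext_emb ` W)"
    using adm by (simp add: admissible_failure_set_def W_def)
  ultimately have "(\<lambda>n. cond_exp_event M (\<lambda>\<omega>. \<phi> (tn n) (inverse (real n) *\<^sub>R Y \<omega>))
      {\<omega>\<in>space M. inverse (real n) *\<^sub>R Y \<omega> \<in> W})
    \<longlonglongrightarrow> (\<integral>y. ext_zero (\<lambda>x. \<phi> t x * indicator W x) y \<partial>\<nu>) / measure \<nu> (ext_emb ` W)"
    by (intro cond_exp_event_region_tendsto eventually_uniformly_close[OF \<phi>_cont tn]
        borel_measurable_continuous_onI)
  moreover have "eventually (\<lambda>n. cond_exp_event M (\<lambda>\<omega>. \<phi> (tn n) (inverse (real n) *\<^sub>R Y \<omega>))
      {\<omega>\<in>space M. inverse (real n) *\<^sub>R Y \<omega> \<in> W}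
    = cond_exp_event M (\<lambda>\<omega>. exp (- f (tn n) (inverse (real n) *\<^sub>R (A *v Y \<omega>))))
      {\<omega>\<in>space M. A *v Y \<omega> \<in> (\<lambda>y. real n *\<^sub>R y) ` \<Gamma>}) sequentially"
    using eventually_gt_at_top[of 0]
    by eventually_elim (simp add: \<phi>_def W_def scaled_preimage_iff[OF inv] matrix_vector_mult_scaleR)
  moreover have "continuous_on UNIV (\<lambda>x. exp (- f t x))"
    by (intro continuous_intros continuous_on_compose2[OF f_cont, of UNIV "\<lambda>x. (t, x)", simplified])
  then have "(\<integral>x. exp (- f t x) \<partial>distr N borel X)
      = (\<integral>y. ext_zero (\<lambda>x. \<phi> t x * indicator W x) y \<partial>\<nu>) / measure \<nu> (ext_emb ` W)"
    unfolding \<phi>_def W_def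
    by (intro integral_distr_failure_law[OF rv inv adm X law[unfolded W_def]] borel_measurable_continuous_onI)
  ultimately show ?thesis
    by (simp add: Lim_transform_eventually)
qed

theorem lemma3p5:
  fixes M :: "'a measure" and Z :: "int \<Rightarrow> 'a \<Rightarrow> real^'d" and \<alpha> :: real
    and \<nu> :: "(ereal^'d) measure" and A :: "real^'d^'d" and \<Gamma> :: "(real^'d) set"
    and f :: "real \<Rightarrow> real^'d \<Rightarrow> real"
    and N :: "'b measure" and U :: "'b \<Rightarrow> real" and X :: "'b \<Rightarrow> real^'d"
  assumes "prob_space M"
    and "prob_space.indep_vars M (\<lambda>_. borel) Z UNIV"
    and "\<And>i. distr M borel (Z i) = distr M borel (Z 0)"
    and "\<And>i. integrable M (Z i)"
    and "\<And>i. (\<integral>\<omega>. Z i \<omega> \<partial>M) = 0"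
    and "\<alpha> > 1"
    and "regularly_varying M (Z 0) \<alpha> \<nu>"
    and "invertible A"
    and "admissible_failure_set \<nu> A \<Gamma>"
    and "\<And>t x. f t x \<ge> 0"
    and "continuous_on UNIV (\<lambda>(t, x). f t x)"
    and "prob_space N"
    and "U \<in> borel_measurable N" and "X \<in> borel_measurable N"
    and "distr N borel U = uniform_measure lborel {0..1}"
    and "\<And>B. B \<in> sets borel \<Longrightarrow>
           emeasure (distr N borel X) B =
             emeasure \<nu> (ext_emb ` ((\<lambda>y. matrix_inv A *v y) ` (B \<inter> \<Gamma>)))
             / emeasure \<nu> (ext_emb ` ((\<lambda>y. matrix_inv A *v y) ` \<Gamma>))"
    and "distr N borel (\<lambda>\<omega>. (U \<omega>, X \<omega>)) = distr N borel U \<Otimes>\<^sub>M distr N borel X"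
  shows "(\<lambda>n. (\<Sum>i<n. cond_exp_event M
              (\<lambda>\<omega>. exp (- f (real i / real n) (inverse (real n) *\<^sub>R (A *v Z (int i) \<omega>))))
              {\<omega>\<in>space M. A *v Z (int i) \<omega> \<in> (\<lambda>y. real n *\<^sub>R y) ` \<Gamma>}) / real n)
         \<longlonglongrightarrow> (\<integral>\<omega>. exp (- f (U \<omega>) (X \<omega>)) \<partial>N)"
proof -
  have rv: "rv_vector M (Z 0) \<alpha> \<nu>"
    using assms(1,6,7) by (intro rv_vector.intro rv_vector_axioms.intro) auto
  have [measurable]: "Z i \<in> borel_measurable M" for i
    using assms(4) by (rule borel_measurable_integrable)
  have f_cont: "continuous_on UNIV (\<lambda>p. exp (- f (fst p) (snd p)))"
    using assms(11) by (intro continuous_intros) (simp add: case_prod_beta')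
  then have f_meas [measurable]: "(\<lambda>(t, x). exp (- f t x)) \<in> borel_measurable borel"
    by (simp add: borel_measurable_continuous_onI case_prod_beta')
  have [measurable]: "(\<lambda>x. exp (- f t x)) \<in> borel_measurable borel" for t
    by (intro borel_measurable_continuous_onI continuous_on_compose2[OF f_cont, of UNIV "\<lambda>x. (t, x)", simplified])
      (intro continuous_intros)
  define F where "F n t = cond_exp_event M (\<lambda>\<omega>. exp (- f t (inverse (real n) *\<^sub>R (A *v Z 0 \<omega>))))
    {\<omega>\<in>space M. A *v Z 0 \<omega> \<in> (\<lambda>y. real n *\<^sub>R y) ` \<Gamma>}" for n t
  define G where "G t = (\<integral>x. exp (- f t x) \<partial>distr N borel X)" for t
  have summand: "cond_exp_event M (\<lambda>\<omega>. exp (- f (real i / real n) (inverse (real n) *\<^sub>R (A *v Z (int i) \<omega>))))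
      {\<omega>\<in>space M. A *v Z (int i) \<omega> \<in> (\<lambda>y. real n *\<^sub>R y) ` \<Gamma>} = F n (real i / real n)" if "i < n" for n i
    using cond_exp_event_distr_eq[of "Z (int i)" M "Z 0" "\<lambda>z. exp (- f (real i / real n) (inverse (real n) *\<^sub>R (A *v z)))"
        "{z. A *v z \<in> (\<lambda>y. real n *\<^sub>R y) ` \<Gamma>}"] that assms(3,9)
      sets_scaled_failure_set[OF assms(8), of n]
    by (simp add: F_def admissible_failure_set_def)
  have "(\<lambda>n. F n (tn n)) \<longlonglongrightarrow> G t" if "tn \<longlonglongrightarrow> t" for tn t
    unfolding F_def G_def by (rule cond_exp_event_failure_tendsto[OF rv assms(8-11,14,16) that])
  moreover have "\<bar>F n t\<bar> \<le> 1" for n t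
    using cond_exp_event_bounds[OF assms(1)] assms(10) by (simp add: F_def abs_le_iff)
  moreover have "G \<in> borel_measurable borel"
    unfolding G_def using assms(12,14) f_meas by (rule borel_measurable_integral_distr)
  ultimately have "(\<lambda>n. (\<Sum>i<n. F n (real i / real n)) / real n) \<longlonglongrightarrow> (\<integral>t. G t \<partial>distr N borel U)"
    using riemann_average_tendsto[of F 1 G] assms(15) by simp
  moreover have "(\<integral>t. G t \<partial>distr N borel U) = (\<integral>\<omega>. exp (- f (U \<omega>) (X \<omega>)) \<partial>N)"
    using integral_indep_pair[OF assms(12,13,14,17) f_meas, of 1] assms(10) by (simp add: G_def)
  ultimately show ?thesis
    by (simp add: summand)
qed

end
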